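(* Fix $x_0$, $\tau\in(0,1)$, $v\in B(0,\rho_{\max})$. There exist a finite positive constant $\beta_1'(x_0)$ and, for each $i\in\{2,\dots,T+1\}$, a finite set $\mathcal{L}_i'$ of sequences of non-negative integers of length $i-1$ and finite positive constants $\beta_i'^{(j_1,\dots,j_{i-1})}(x_0)$, depending on $x_0$ and $(j_1,\dots,j_{i-1})$ but not on $\epsilon$, the perturbed control, or the observations, such that for every nominal control $u\in U$ left continuous at $\tau$, every $(y_1,\dots,y_T)$ and every $\epsilon\in[0,\tau)$: $$\left|\frac{\partial_+}{\partial\epsilon}c(x_1^\epsilon(t),u^\epsilon(t))\right|\le\beta_1'(x_0)\quad\forall t\in(\tau,1];$$ for each $i\in\{2,\dots,T\}$ and all $t\in[i-1,i]$, $$\left|\frac{\partial_+}{\partial\epsilon}c(x_i^\epsilon(t),u^\epsilon(t))\right|\le\sum_{(j_1,\dots,j_{i-1})\in\mathcal{L}_i'}\beta_i'^{(j_1,\dots,j_{i-1})}(x_0)\prod_{m=1}^{i-1}\|y_m\|_2^{j_m};$$ and $$\left|\frac{\partial_+}{\partial\epsilon}h(x^\epsilon(T))\right|\le\sum_{(j_1,\dots,j_T)\in\mathcal{L}_{T+1}'}\beta_{T+1}'^{(j_1,\dots,j_T)}(x_0)\prod_{m=1}^{T}\|y_m\|_2^{j_m}.$$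
   Context: Fix positive integers $T,m,n_x,n_y$ and $\rho_{\max}\in(0,\infty)$; $B(0,\rho_{\max})$ is the closed Euclidean ball of radius $\rho_{\max}$ in $\mathbb{R}^m$; $U$ is the set of piecewise continuous $u:[0,T]\to\mathbb{R}^m$ with $\|u(t)\|_2\le\rho_{\max}$ for all $t$. $f:\mathbb{R}^{n_x}\times\mathbb{R}^m\to\mathbb{R}^{n_x}$ is continuously differentiable and there is $K_1\in[1,\infty)$ with $\|f(x',u')-f(x'',u'')\|_2\le K_1(\|x'-x''\|_2+\|u'-u''\|_2)$ for all $x',x''$ and $u',u''\in B(0,\rho_{\max})$. $g:\mathbb{R}^{n_x}\times\mathbb{R}^{n_y}\to\mathbb{R}^{n_x}$ is continuous and differentiable in its first argument, and there are $K_2,\dots,K_5\ge0$ and positive integers $L_1,L_2$ such that for all $x,y$ both $\|g(x,y)\|_2$ and $\|\frac{\partial}{\partial x}g(x,y)\|_2$ are at most $K_2+K_3\|x\|_2^{L_1}+K_4\|y\|_2^{L_2}+K_5\|x\|_2^{L_1}\|y\|_2^{L_2}$. For a control $w\in U$ the hybrid trajectory from $x_0$ is: $x_1$ on $[0,1]$ solves $\dot x_1=f(x_1,w)$, $x_1(0)=x_0$; for $i=2,\dots,T$, $x_i$ on $[i-1,i]$ solves $\dot x_i=f(x_i,w)$ with $x_i(i-1)=g(x_{i-1}(i-1),y_{i-1})$; $x(t)=x_i(t)$ for $t\in[i-1,i)$, and $x(T)=g(x_T(T),y_T)$. Perturbed control: for $\epsilon\in[0,\tau]$, $u^\epsilon(t)=v$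 if $t\in(\tau-\epsilon,\tau]$ and $u^\epsilon(t)=u(t)$ otherwise; $x^\epsilon$ (modes $x_i^\epsilon$) is the trajectory under $u^\epsilon$. Costs: $c:\mathbb{R}^{n_x}\times\mathbb{R}^m\to\mathbb{R}$ is continuous and continuously differentiable in $x$, $h:\mathbb{R}^{n_x}\to\mathbb{R}$ is differentiable, and there are $K_6,K_7\ge0$ and a positive integer $L_3$ such that $|c(x,u)|$, $\|\frac{\partial}{\partial x}c(x,u)\|_2$, $|h(x)|$, $\|\frac{\partial}{\partial x}h(x)\|_2$ are all at most $K_6+K_7\|x\|_2^{L_3}$ for all $x$ and $u\in B(0,\rho_{\max})$. $\frac{\partial_+}{\partial\epsilon}$ denotes the right derivative with respect to $\epsilon$. *)

theory Defs
  imports "HOL-Analysis.Analysis"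
begin

definition piecewise_continuous_on :: "real \<Rightarrow> real \<Rightarrow> (real \<Rightarrow> 'a::real_normed_vector) \<Rightarrow> bool" where
  "piecewise_continuous_on a b u \<longleftrightarrow>
     (\<exists>S. finite S \<and>
        (\<forall>t\<in>{a..b} - S. continuous (at t within {a..b}) u) \<and>
        (\<forall>s\<in>S. (a < s \<longrightarrow> (\<exists>l. (u \<longlongrightarrow> l) (at_left s))) \<and>
                (s < b \<longrightarrow> (\<exists>l. (u \<longlongrightarrow> l) (at_right s)))))"

definition admissible_controls :: "nat \<Rightarrow> real \<Rightarrow> (real \<Rightarrow> 'u::real_normed_vector) set" where
  "admissible_controls T \<rho> = {u. piecewise_continuous_on 0 (real T) u \<and>
        (\<forall>t\<in>{0..real T}. norm (u t) \<le> \<rho>)}"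

definition needle :: "(real \<Rightarrow> 'u) \<Rightarrow> 'u \<Rightarrow> real \<Rightarrow> real \<Rightarrow> real \<Rightarrow> 'u" where
  "needle u v \<tau> \<epsilon> t = (if \<tau> - \<epsilon> < t \<and> t \<le> \<tau> then v else u t)"

definition ode_sol_on :: "('x::euclidean_space \<Rightarrow> 'u \<Rightarrow> 'x) \<Rightarrow> (real \<Rightarrow> 'u) \<Rightarrow> real \<Rightarrow> real \<Rightarrow> 'x
    \<Rightarrow> (real \<Rightarrow> 'x) \<Rightarrow> bool" where
  "ode_sol_on f w a b x0 \<xi> \<longleftrightarrow> continuous_on {a..b} \<xi> \<and> \<xi> a = x0 \<and>
     (\<forall>t\<in>{a..b}. ((\<lambda>s. f (\<xi> s) (w s)) has_integral (\<xi> t - x0)) {a..t})"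

text \<open>X i is the i-th mode (on [i-1,i]) of the hybrid trajectory from x0 under control w
  and observations ys (indexed 1..T).\<close>
definition hybrid_modes :: "('x::euclidean_space \<Rightarrow> 'u \<Rightarrow> 'x) \<Rightarrow> ('x \<Rightarrow> 'y \<Rightarrow> 'x) \<Rightarrow> nat \<Rightarrow> 'x
    \<Rightarrow> (nat \<Rightarrow> 'y) \<Rightarrow> (real \<Rightarrow> 'u) \<Rightarrow> (nat \<Rightarrow> real \<Rightarrow> 'x) \<Rightarrow> bool" where
  "hybrid_modes f g T x0 ys w X \<longleftrightarrow>
     ode_sol_on f w 0 1 x0 (X 1) \<and>
     (\<forall>i\<in>{2..T}. ode_sol_on f w (real i - 1) (real i)
                    (g (X (i - 1) (real i - 1)) (ys (i - 1))) (X i))"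

end

(*
  Let dx(t) be the right derivative of the state with respect to the needle width at width epsilon.
  At the start of the needle, t = tau - epsilon, it equals f(x, v) - f(x, u(tau - epsilon -)),
  of norm at most 2 K1 rho.  Along a mode, difference quotients of perturbed solutions satisfy the
  linearised equation up to an error that vanishes with the width, so by Gronwall's inequality they
  form a Cauchy family: dx(t) exists and grows by at most the factor exp K1 per mode.  At a jump it
  is multiplied by the x-derivative of g, whose norm is polynomial in the current state bound and
  in ||y_i||; the state bounds propagate through the modes in the same way.  The chain rule with the
  polynomially bounded derivatives of c and h then bounds the cost derivatives by polynomials in
  ||y_1||, ..., ||y_(i-1)||, and every such polynomial is dominated by a finite sum of monomials
  with positive coefficients.
*)

theory Submission
  imports Defs
begin

section \<open>Gronwall estimates and one-sided derivatives\<close>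

lemma gronwall_inequality:
  fixes \<phi> :: "real \<Rightarrow> real"
  assumes cont: "continuous_on {a..b} \<phi>" and K: "0 \<le> K"
    and le: "\<And>s. s \<in> {a..b} \<Longrightarrow> \<phi> s \<le> C + K * integral {a..s} \<phi>"
    and t: "t \<in> {a..b}"
  shows "\<phi> t \<le> C * exp (K * (t - a))"
proof -
  define \<Phi> where "\<Phi> s = integral {a..s} \<phi>" for s
  define G where "G s = exp (- (K * (s - a))) * (C + K * \<Phi> s)" for s
  have dG: "(G has_real_derivative exp (- (K * (s - a))) * K * (\<phi> s - (C + K * \<Phi> s)))
      (at s within {a..b})" if "s \<in> {a..b}" for s
  proof -
    have "(\<Phi> has_real_derivative \<phi> s) (at s within {a..b})"
      unfolding \<Phi>_def has_real_derivative_iff_has_vector_derivative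
      by (rule integral_has_vector_derivative[OF cont that])
    then show ?thesis
      unfolding G_def by (auto intro!: derivative_eq_intros simp: algebra_simps)
  qed
  have "G t \<le> G a"
  proof (rule DERIV_nonpos_imp_decreasing_open[of a t G])
    show "a \<le> t" using t by auto
    have "continuous_on {a..b} G"
      using dG by (meson DERIV_continuous continuous_on_eq_continuous_within)
    then show "continuous_on {a..t} G"
      by (rule continuous_on_subset) (use t in auto)
    fix s assume s: "a < s" "s < t"
    then have "s \<in> {a..b}" "s \<in> interior {a..b}" using t by auto
    with dG have "(G has_real_derivative exp (- (K * (s - a))) * K * (\<phi> s - (C + K * \<Phi> s))) (at s)"
      by (metis at_within_interior)
    moreover have "exp (- (K * (s - a))) * K * (\<phi> s - (C + K * \<Phi> s)) \<le> 0"
      using le[OF \<open>s \<in> {a..b}\<close>] K unfolding \<Phi>_def by (intro mult_nonneg_nonpos) auto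
    ultimately show "\<exists>y. (G has_real_derivative y) (at s) \<and> y \<le> 0" by blast
  qed
  then have "exp (- (K * (t - a))) * (C + K * \<Phi> t) \<le> C"
    by (simp add: G_def \<Phi>_def)
  then have "exp (K * (t - a)) * (exp (- (K * (t - a))) * (C + K * \<Phi> t)) \<le> C * exp (K * (t - a))"
    by (simp add: mult.commute)
  then have "C + K * \<Phi> t \<le> C * exp (K * (t - a))"
    by (simp add: mult.assoc[symmetric] flip: exp_add)
  then show ?thesis using le[OF t] unfolding \<Phi>_def by linarith
qed

lemma integral_gronwall:
  fixes \<psi> F :: "real \<Rightarrow> 'a::euclidean_space"
  assumes ab: "a \<le> b" and cont: "continuous_on {a..b} \<psi>"
    and int: "\<And>s. s \<in> {a..b} \<Longrightarrow> (F has_integral (\<psi> s - \<psi> a)) {a..s}"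
    and bound: "\<And>s. s \<in> {a..b} \<Longrightarrow> norm (F s) \<le> B + K * norm (\<psi> s)"
    and K: "0 \<le> K" and B: "0 \<le> B"
    and t: "t \<in> {a..b}"
  shows "norm (\<psi> t) \<le> (norm (\<psi> a) + B * (b - a)) * exp (K * (t - a))"
proof (rule gronwall_inequality[OF _ K _ t])
  show cont_norm: "continuous_on {a..b} (\<lambda>s. norm (\<psi> s))"
    using cont by (intro continuous_intros)
  fix s assume s: "s \<in> {a..b}"
  then have sub: "{a..s} \<subseteq> {a..b}" by auto
  have int_norm: "((\<lambda>s. norm (\<psi> s)) has_integral integral {a..s} (\<lambda>s. norm (\<psi> s))) {a..s}"
    by (intro integrable_integral integrable_continuous_interval continuous_on_subset[OF cont_norm sub])
  have "norm (\<psi> s - \<psi> a) = norm (integral {a..s} F)"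
    using int[OF s] by (simp add: integral_unique)
  also have "\<dots> \<le> integral {a..s} (\<lambda>s. B + K * norm (\<psi> s))"
    using int[OF s] has_integral_integrable[OF int_norm] sub bound
    by (intro integral_norm_bound_integral) (auto intro!: integrable_add integrable_on_mult_right)
  also have "\<dots> = B * (s - a) + K * integral {a..s} (\<lambda>s. norm (\<psi> s))"
    using has_integral_add[OF has_integral_const_real[of B a s] has_integral_mult_right[OF int_norm]] s
    by (simp add: integral_unique mult.commute)
  also have "B * (s - a) \<le> B * (b - a)"
    using s B by (intro mult_left_mono) auto
  finally show "norm (\<psi> s) \<le> (norm (\<psi> a) + B * (b - a)) + K * integral {a..s} (\<lambda>s. norm (\<psi> s))"
    using norm_triangle_sub[of "\<psi> s" "\<psi> a"] by linarith
qed

lemma has_vector_derivative_iff_difference_quotient: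
  fixes \<phi> :: "real \<Rightarrow> 'a::real_normed_vector"
  shows "(\<phi> has_vector_derivative Z) (at x within S) \<longleftrightarrow>
         ((\<lambda>y. (\<phi> y - \<phi> x) /\<^sub>R (y - x)) \<longlongrightarrow> Z) (at x within S)"
proof -
  have "\<forall>\<^sub>F y in at x within S. norm ((\<phi> y - \<phi> x - (y - x) *\<^sub>R Z) /\<^sub>R norm (y - x))
                               = norm ((\<phi> y - \<phi> x) /\<^sub>R (y - x) - Z)"
  proof (rule eventually_at_filter[THEN iffD2, OF always_eventually], intro allI impI)
    fix y assume "y \<noteq> x"
    then have "(\<phi> y - \<phi> x) /\<^sub>R (y - x) - Z = (\<phi> y - \<phi> x - (y - x) *\<^sub>R Z) /\<^sub>R (y - x)"
      by (simp add: scaleR_diff_right)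
    then show "norm ((\<phi> y - \<phi> x - (y - x) *\<^sub>R Z) /\<^sub>R norm (y - x))
             = norm ((\<phi> y - \<phi> x) /\<^sub>R (y - x) - Z)"
      by simp
  qed
  then have "((\<lambda>y. (\<phi> y - \<phi> x - (y - x) *\<^sub>R Z) /\<^sub>R norm (y - x)) \<longlongrightarrow> 0) (at x within S) \<longleftrightarrow>
             ((\<lambda>y. (\<phi> y - \<phi> x) /\<^sub>R (y - x) - Z) \<longlongrightarrow> 0) (at x within S)"
    by (subst (1 2) tendsto_norm_zero_iff[symmetric]) (rule tendsto_cong)
  then show ?thesis
    unfolding has_vector_derivative_def has_derivative_at_within
    by (simp add: bounded_linear_scaleR_left Lim_null[symmetric])
qed

lemma norm_difference_quotient_le:
  assumes "0 < h" "norm (D - h *\<^sub>R Z) \<le> B * h"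
  shows "norm (D /\<^sub>R h - Z) \<le> B"
proof -
  have "D /\<^sub>R h - Z = (D - h *\<^sub>R Z) /\<^sub>R h"
    using assms(1) by (simp add: scaleR_diff_right)
  then show ?thesis
    using assms by (simp add: inverse_eq_divide pos_divide_le_eq)
qed

lemma has_vector_derivative_at_right_cong:
  assumes "(\<phi> has_vector_derivative z) (at_right x)" "x < b" "\<And>e. x \<le> e \<Longrightarrow> e < b \<Longrightarrow> \<phi> e = \<psi> e"
  shows "(\<psi> has_vector_derivative z) (at_right x)"
proof -
  have "eventually (\<lambda>e. e \<in> {..<b}) (nhds x)"
    using assms(2) by (intro eventually_nhds_in_open) auto
  then have "eventually (\<lambda>e. e \<in> {x<..} \<longrightarrow> \<phi> e = \<psi> e) (nhds x)"
    by (rule eventually_mono) (use assms(3) in auto)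
  then show ?thesis
    using has_vector_derivative_cong_ev[where S = "{x<..}" and f = \<phi> and g = \<psi>] assms by simp
qed

lemma has_integral_Icc_diff:
  fixes F :: "real \<Rightarrow> 'a::banach"
  assumes "(F has_integral I) {a..p}" "(F has_integral J) {a..q}" "a \<le> p" "p \<le> q"
  shows "(F has_integral (J - I)) {p..q}"
proof -
  obtain I' where I': "(F has_integral I') {p..q}"
    using integrable_subinterval_real[of F a q p q] assms by auto
  have "I + I' = J"
    using has_integral_combine[OF assms(3,4,1) I'] assms(2) by (rule has_integral_unique)
  with I' show ?thesis by (metis add_diff_cancel_left')
qed

lemma has_vector_derivative_blinfun_compose:
  assumes "(\<phi> has_vector_derivative z) (at x within S)"
    and "(\<psi> has_derivative blinfun_apply \<Psi>) (at (\<phi> x))"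
  shows "((\<lambda>e. \<psi> (\<phi> e)) has_vector_derivative \<Psi> z) (at x within S)"
  using has_derivative_compose[OF assms(1)[unfolded has_vector_derivative_def] assms(2)]
  by (simp add: has_vector_derivative_def blinfun.scaleR_right)

lemma has_real_derivative_compose_norm_le:
  fixes \<psi> :: "'a::real_normed_vector \<Rightarrow> real"
  assumes "(\<phi> has_vector_derivative z) (at x within S)"
    and "(\<psi> has_derivative blinfun_apply \<Psi>) (at (\<phi> x))" and "norm \<Psi> \<le> B"
  shows "\<exists>D. ((\<lambda>e. \<psi> (\<phi> e)) has_real_derivative D) (at x within S) \<and> \<bar>D\<bar> \<le> B * norm z"
proof (intro exI conjI)
  show "((\<lambda>e. \<psi> (\<phi> e)) has_real_derivative \<Psi> z) (at x within S)"
    unfolding has_real_derivative_iff_has_vector_derivative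
    by (rule has_vector_derivative_blinfun_compose[OF assms(1,2)])
  show "\<bar>\<Psi> z\<bar> \<le> B * norm z"
    using norm_blinfun[of \<Psi> z] assms(3) by (simp add: mult_right_mono order_trans)
qed

lemma partial_derivative_fst:
  fixes f :: "'a::real_normed_vector \<Rightarrow> 'b::real_normed_vector \<Rightarrow> 'c::real_normed_vector"
  assumes "\<And>p. ((\<lambda>q. f (fst q) (snd q)) has_derivative blinfun_apply (f' p)) (at p)"
    and "continuous_on UNIV f'"
  shows "((\<lambda>y. f y u) has_derivative blinfun_apply (f' (x, u) o\<^sub>L Blinfun (\<lambda>h. (h, 0)))) (at x)"
    and "continuous_on UNIV (\<lambda>p. f' (fst p, snd p) o\<^sub>L Blinfun (\<lambda>h. (h, 0)))"
proof -
  have "bounded_linear (\<lambda>h::'a. (h, 0::'b))"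
    by (intro bounded_linear_Pair bounded_linear_ident bounded_linear_zero)
  then have "blinfun_apply (f' (x, u) o\<^sub>L Blinfun (\<lambda>h. (h, 0))) = (\<lambda>h. f' (x, u) (h, 0))"
    by (simp add: bounded_linear_Blinfun_apply fun_eq_iff)
  moreover have "((\<lambda>y. (y, u)) has_derivative (\<lambda>h. (h, 0))) (at x)"
    by (auto intro!: derivative_eq_intros)
  from has_derivative_compose[OF this assms(1)]
  have "((\<lambda>y. f y u) has_derivative (\<lambda>h. f' (x, u) (h, 0))) (at x)"
    by simp
  ultimately show "((\<lambda>y. f y u) has_derivative blinfun_apply (f' (x, u) o\<^sub>L Blinfun (\<lambda>h. (h, 0)))) (at x)"
    by simp
  show "continuous_on UNIV (\<lambda>p. f' (fst p, snd p) o\<^sub>L Blinfun (\<lambda>h. (h, 0)))"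
    by (auto intro!: continuous_intros continuous_on_compose2[OF assms(2)])
qed

section \<open>Solutions of the controlled equation\<close>

lemma ode_sol_on_initial: "ode_sol_on f w a b x0 \<xi> \<Longrightarrow> \<xi> a = x0"
  unfolding ode_sol_on_def by blast

lemma ode_sol_on_subinterval:
  assumes sol: "ode_sol_on f w a b x0 \<xi>" and "a \<le> a'" "b' \<le> b"
  shows "ode_sol_on f w a' b' (\<xi> a') \<xi>"
  unfolding ode_sol_on_def
proof (intro conjI ballI refl)
  show "continuous_on {a'..b'} \<xi>"
    using sol assms(2,3) unfolding ode_sol_on_def by (auto intro: continuous_on_subset)
  fix t assume t: "t \<in> {a'..b'}"
  have "((\<lambda>s. f (\<xi> s) (w s)) has_integral (\<xi> a' - x0)) {a..a'}"
    "((\<lambda>s. f (\<xi> s) (w s)) has_integral (\<xi> t - x0)) {a..t}"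
    using sol assms(2,3) t unfolding ode_sol_on_def by auto
  from has_integral_Icc_diff[OF this] have "((\<lambda>s. f (\<xi> s) (w s)) has_integral ((\<xi> t - x0) - (\<xi> a' - x0))) {a'..t}"
    using assms(2) t by auto
  then show "((\<lambda>s. f (\<xi> s) (w s)) has_integral (\<xi> t - \<xi> a')) {a'..t}"
    by simp
qed

lemma ode_sol_on_control_cong:
  assumes sol: "ode_sol_on f w1 a b x0 \<xi>" and S: "finite S"
    and eq: "\<And>s. s \<in> {a..b} - S \<Longrightarrow> w1 s = w2 s"
  shows "ode_sol_on f w2 a b x0 \<xi>"
  unfolding ode_sol_on_def
proof (intro conjI ballI)
  show "continuous_on {a..b} \<xi>" "\<xi> a = x0"
    using sol unfolding ode_sol_on_def by auto
  fix t assume t: "t \<in> {a..b}"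
  have "((\<lambda>s. f (\<xi> s) (w1 s)) has_integral (\<xi> t - x0)) {a..t}"
    using sol t unfolding ode_sol_on_def by auto
  then show "((\<lambda>s. f (\<xi> s) (w2 s)) has_integral (\<xi> t - x0)) {a..t}"
    by (rule has_integral_spike_finite[OF S, rotated]) (use eq t in auto)
qed

lemma ode_sol_on_bounded:
  assumes "ode_sol_on f w a b x0 \<xi>"
  obtains R where "\<And>s. s \<in> {a..b} \<Longrightarrow> norm (\<xi> s) \<le> R"
proof -
  have "compact (\<xi> ` {a..b})"
    using assms unfolding ode_sol_on_def by (intro compact_continuous_image) auto
  then obtain R where "\<forall>y\<in>\<xi> ` {a..b}. norm y \<le> R"
    using compact_imp_bounded bounded_pos by blast
  then show ?thesis
    using that by blast
qed

lemma admissible_control_left_limit: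
  assumes u: "u \<in> admissible_controls T \<rho>" and s: "0 < s" "s \<le> real T"
  shows "\<exists>l. (u \<longlongrightarrow> l) (at_left s)"
proof -
  obtain S where S: "\<forall>t\<in>{0..real T} - S. continuous (at t within {0..real T}) u"
    "\<forall>s\<in>S. 0 < s \<longrightarrow> (\<exists>l. (u \<longlongrightarrow> l) (at_left s))"
    using u unfolding admissible_controls_def piecewise_continuous_on_def by blast
  show ?thesis
  proof (cases "s \<in> S")
    case False
    then have "(u \<longlongrightarrow> u s) (at s within {0..real T})"
      using S(1) s by (auto simp: continuous_within)
    then have "(u \<longlongrightarrow> u s) (at s within {0..s})"
      by (rule tendsto_within_subset) (use s in auto)
    then show ?thesis
      using at_within_Icc_at_left[OF s(1)] by auto
  qed (use S(2) s in blast)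
qed

locale lipschitz_flow =
  fixes f :: "'x::euclidean_space \<Rightarrow> 'u::real_normed_vector \<Rightarrow> 'x" and \<rho> K :: real
  assumes rho_nonneg: "0 \<le> \<rho>" and K_nonneg: "0 \<le> K"
    and f_lipschitz: "\<And>x1 x2 u1 u2. u1 \<in> cball 0 \<rho> \<Longrightarrow> u2 \<in> cball 0 \<rho> \<Longrightarrow>
      norm (f x1 u1 - f x2 u2) \<le> K * (norm (x1 - x2) + norm (u1 - u2))"
begin

definition growth_const :: real where
  "growth_const = norm (f 0 0) + K * \<rho>"

lemma growth_const_nonneg: "0 \<le> growth_const"
  using rho_nonneg K_nonneg by (simp add: growth_const_def)

lemma norm_f_le:
  assumes "u \<in> cball 0 \<rho>"
  shows "norm (f x u) \<le> growth_const + K * norm x"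
proof -
  have "norm (f x u - f 0 0) \<le> K * (norm (x - 0) + norm (u - 0))"
    using f_lipschitz[of u 0 x 0] assms rho_nonneg by simp
  also have "\<dots> \<le> K * norm x + K * \<rho>"
    using assms K_nonneg by (simp add: distrib_left mult_left_mono)
  finally show ?thesis
    using norm_triangle_sub[of "f x u" "f 0 0"] unfolding growth_const_def by linarith
qed

lemma ode_sol_on_norm_le:
  assumes sol: "ode_sol_on f w a b x0 \<xi>" and ab: "a \<le> b" "b \<le> a + 1"
    and w: "\<And>s. s \<in> {a..b} \<Longrightarrow> w s \<in> cball 0 \<rho>" and t: "t \<in> {a..b}"
  shows "norm (\<xi> t) \<le> (norm x0 + growth_const) * exp K"
proof -
  have "norm (\<xi> t) \<le> (norm (\<xi> a) + growth_const * (b - a)) * exp (K * (t - a))"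
  proof (rule integral_gronwall[OF ab(1) _ _ _ K_nonneg growth_const_nonneg t])
    show "continuous_on {a..b} \<xi>" "\<And>s. s \<in> {a..b} \<Longrightarrow>
        ((\<lambda>s. f (\<xi> s) (w s)) has_integral (\<xi> s - \<xi> a)) {a..s}"
      using sol unfolding ode_sol_on_def by auto
    show "\<And>s. s \<in> {a..b} \<Longrightarrow> norm (f (\<xi> s) (w s)) \<le> growth_const + K * norm (\<xi> s)"
      using norm_f_le w by blast
  qed
  also have "\<dots> \<le> (norm x0 + growth_const) * exp K"
  proof (intro mult_mono)
    show "norm (\<xi> a) + growth_const * (b - a) \<le> norm x0 + growth_const"
      using sol ab growth_const_nonneg by (simp add: ode_sol_on_initial mult_left_le)
    show "exp (K * (t - a)) \<le> exp K"
      using t ab K_nonneg by (simp add: mult_left_le)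
  qed (use growth_const_nonneg in auto)
  finally show ?thesis .
qed

lemma ode_sol_on_dist_le:
  assumes sol1: "ode_sol_on f w a b x1 \<xi>1" and sol2: "ode_sol_on f w a b x2 \<xi>2"
    and w: "\<And>s. s \<in> {a..b} \<Longrightarrow> w s \<in> cball 0 \<rho>" and t: "t \<in> {a..b}"
  shows "norm (\<xi>1 t - \<xi>2 t) \<le> norm (x1 - x2) * exp (K * (t - a))"
proof -
  have "norm (\<xi>1 t - \<xi>2 t) \<le> (norm (\<xi>1 a - \<xi>2 a) + 0 * (b - a)) * exp (K * (t - a))"
  proof (rule integral_gronwall[where F = "\<lambda>s. f (\<xi>1 s) (w s) - f (\<xi>2 s) (w s)"])
    show "continuous_on {a..b} (\<lambda>s. \<xi>1 s - \<xi>2 s)"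
      using sol1 sol2 unfolding ode_sol_on_def by (intro continuous_intros) auto
    fix s assume s: "s \<in> {a..b}"
    have "((\<lambda>s. f (\<xi>1 s) (w s)) has_integral (\<xi>1 s - \<xi>1 a)) {a..s}"
      "((\<lambda>s. f (\<xi>2 s) (w s)) has_integral (\<xi>2 s - \<xi>2 a)) {a..s}"
      using sol1 sol2 s unfolding ode_sol_on_def by auto
    moreover have "\<xi>1 s - \<xi>1 a - (\<xi>2 s - \<xi>2 a) = \<xi>1 s - \<xi>2 s - (\<xi>1 a - \<xi>2 a)"
      by (simp add: algebra_simps)
    ultimately show "((\<lambda>s. f (\<xi>1 s) (w s) - f (\<xi>2 s) (w s)) has_integral (\<xi>1 s - \<xi>2 s - (\<xi>1 a - \<xi>2 a))) {a..s}"
      by (metis has_integral_diff)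
    show "norm (f (\<xi>1 s) (w s) - f (\<xi>2 s) (w s)) \<le> 0 + K * norm (\<xi>1 s - \<xi>2 s)"
      using f_lipschitz[OF w w, of s s "\<xi>1 s" "\<xi>2 s"] s by simp
  qed (use t K_nonneg in auto)
  then show ?thesis
    using sol1 sol2 by (simp add: ode_sol_on_initial)
qed

lemma ode_sol_on_unique:
  assumes "ode_sol_on f w a b x0 \<xi>1" "ode_sol_on f w a b x0 \<xi>2"
    and "\<And>s. s \<in> {a..b} \<Longrightarrow> w s \<in> cball 0 \<rho>" and "t \<in> {a..b}"
  shows "\<xi>1 t = \<xi>2 t"
  using ode_sol_on_dist_le[OF assms] by simp

end

section \<open>Differentiability with respect to the initial state\<close>

locale C1_lipschitz_flow = lipschitz_flow f \<rho> K
  for f :: "'x::euclidean_space \<Rightarrow> 'u::euclidean_space \<Rightarrow> 'x" and \<rho> K +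
  fixes fx :: "'x \<Rightarrow> 'u \<Rightarrow> 'x \<Rightarrow>\<^sub>L 'x"
  assumes fx_deriv: "\<And>x u. ((\<lambda>y. f y u) has_derivative blinfun_apply (fx x u)) (at x)"
    and fx_cont: "continuous_on UNIV (\<lambda>p. fx (fst p) (snd p))"
begin

lemma fx_bounded:
  obtains M where "0 \<le> M" "\<And>(x::'x) u. norm x \<le> R \<Longrightarrow> u \<in> cball 0 \<rho> \<Longrightarrow> norm (fx x u) \<le> M"
proof -
  have "compact ((\<lambda>p. fx (fst p) (snd p)) ` (cball 0 R \<times> cball 0 \<rho>))"
    by (intro compact_continuous_image continuous_on_subset[OF fx_cont] compact_Times compact_cball) auto
  then obtain M where M: "0 < M" "\<forall>y\<in>(\<lambda>p. fx (fst p) (snd p)) ` (cball 0 R \<times> cball 0 \<rho>). norm y \<le> M"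
    using compact_imp_bounded bounded_pos by blast
  show ?thesis
  proof (rule that)
    show "0 \<le> M" using M(1) by simp
    fix x :: 'x and u :: 'u assume "norm x \<le> R" "u \<in> cball 0 \<rho>"
    then show "norm (fx x u) \<le> M"
      using M(2)[rule_format, OF imageI[of "(x, u)"]] by simp
  qed
qed

lemma fx_linearization:
  assumes "0 < \<eta>"
  obtains \<delta> where "0 < \<delta>" "\<And>(x::'x) u h. norm x \<le> R \<Longrightarrow> u \<in> cball 0 \<rho> \<Longrightarrow> norm h < \<delta> \<Longrightarrow>
      norm (f (x + h) u - f x u - fx x u h) \<le> \<eta> * norm h"
proof -
  define S where "S = cball (0::'x) (R + 1) \<times> cball (0::'u) \<rho>"
  have "uniformly_continuous_on S (\<lambda>p. fx (fst p) (snd p))"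
    unfolding S_def
    by (intro compact_uniformly_continuous continuous_on_subset[OF fx_cont] compact_Times compact_cball) auto
  then obtain d where d: "0 < d" "\<And>p p'. p \<in> S \<Longrightarrow> p' \<in> S \<Longrightarrow> dist p' p < d \<Longrightarrow>
      dist (fx (fst p') (snd p')) (fx (fst p) (snd p)) < \<eta>"
    using assms unfolding uniformly_continuous_on_def by metis
  show ?thesis
  proof (rule that[of "min d 1"])
    show "0 < min d 1" using d by simp
    fix x h :: 'x and u :: 'u assume x: "norm x \<le> R" and u: "u \<in> cball 0 \<rho>" and h: "norm h < min d 1"
    have "norm (f (x + h) u - f x u - fx x u (x + h - x)) \<le> norm (x + h - x) * \<eta>"
    proof (rule differentiable_bound_linearization[where S = "ball x (min d 1)" and f = "\<lambda>y. f y u"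
        and f' = "\<lambda>y. blinfun_apply (fx y u)"])
      fix s :: real assume "s \<in> {0..1}"
      then have "norm (s *\<^sub>R h) \<le> norm h" by (simp add: mult_left_le_one_le)
      then show "x + s *\<^sub>R (x + h - x) \<in> ball x (min d 1)" using h by (simp add: dist_norm)
    next
      fix y assume "y \<in> ball x (min d 1)"
      show "((\<lambda>y. f y u) has_derivative blinfun_apply (fx y u)) (at y within ball x (min d 1))"
        by (rule has_derivative_at_withinI[OF fx_deriv])
    next
      fix y assume y: "y \<in> ball x (min d 1)"
      then have "norm y \<le> R + 1" using x norm_triangle_sub[of y x] by (simp add: dist_norm norm_minus_commute)
      with x u y have "dist (fx y u) (fx x u) < \<eta>"
        using d(2)[of "(x, u)" "(y, u)"] by (simp add: S_def dist_Pair_Pair dist_commute)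
      then show "onorm (blinfun_apply (fx y u) - blinfun_apply (fx x u)) \<le> \<eta>"
        by (simp add: dist_norm norm_blinfun.rep_eq minus_blinfun.rep_eq fun_diff_def)
    qed (use d in auto)
    then show "norm (f (x + h) u - f x u - fx x u h) \<le> \<eta> * norm h"
      by (simp add: mult.commute)
  qed
qed

lemma difference_quotients_gronwall:
  assumes w: "\<And>s. s \<in> {a..b} \<Longrightarrow> w s \<in> cball 0 \<rho>"
    and sol0: "ode_sol_on f w a b (y0 a) y0" and sol1: "ode_sol_on f w a b (y1 a) y1"
    and sol2: "ode_sol_on f w a b (y2 a) y2"
    and \<alpha>: "0 < \<alpha>1" "0 < \<alpha>2"
    and R: "\<And>s. s \<in> {a..b} \<Longrightarrow> norm (y0 s) \<le> R"
    and M: "0 \<le> M" "\<And>x u. norm x \<le> R \<Longrightarrow> u \<in> cball 0 \<rho> \<Longrightarrow> norm (fx x u) \<le> M"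
    and lin: "0 \<le> \<eta>" "\<And>x u h. norm x \<le> R \<Longrightarrow> u \<in> cball 0 \<rho> \<Longrightarrow> norm h < \<delta> \<Longrightarrow>
      norm (f (x + h) u - f x u - fx x u h) \<le> \<eta> * norm h"
    and close1: "\<And>s. s \<in> {a..b} \<Longrightarrow> norm (y1 s - y0 s) \<le> C * \<alpha>1" "C * \<alpha>1 < \<delta>"
    and close2: "\<And>s. s \<in> {a..b} \<Longrightarrow> norm (y2 s - y0 s) \<le> C * \<alpha>2" "C * \<alpha>2 < \<delta>"
    and C: "0 \<le> C" and t: "t \<in> {a..b}"
  shows "norm ((y1 t - y0 t) /\<^sub>R \<alpha>1 - (y2 t - y0 t) /\<^sub>R \<alpha>2)
    \<le> (norm ((y1 a - y0 a) /\<^sub>R \<alpha>1 - (y2 a - y0 a) /\<^sub>R \<alpha>2) + 2 * \<eta> * C * (b - a)) * exp (M * (t - a))"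
proof -
  define D where "D s = (y1 s - y0 s) /\<^sub>R \<alpha>1 - (y2 s - y0 s) /\<^sub>R \<alpha>2" for s
  define G where "G s = (f (y1 s) (w s) - f (y0 s) (w s)) /\<^sub>R \<alpha>1 - (f (y2 s) (w s) - f (y0 s) (w s)) /\<^sub>R \<alpha>2" for s
  define rem where "rem y \<alpha> s = (f (y s) (w s) - f (y0 s) (w s) - fx (y0 s) (w s) (y s - y0 s)) /\<^sub>R \<alpha>" for y \<alpha> s
  have rem_le: "norm (rem y \<alpha> s) \<le> \<eta> * C"
    if s: "s \<in> {a..b}" and "0 < \<alpha>" "norm (y s - y0 s) \<le> C * \<alpha>" "C * \<alpha> < \<delta>" for y \<alpha> s
  proof -
    have "norm (f (y s) (w s) - f (y0 s) (w s) - fx (y0 s) (w s) (y s - y0 s)) \<le> \<eta> * (C * \<alpha>)"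
      using lin(2)[OF R[OF s] w[OF s], of "y s - y0 s"] that lin(1)
      by (simp add: mult_left_mono order_trans)
    then show ?thesis using \<open>0 < \<alpha>\<close> by (simp add: rem_def inverse_eq_divide pos_divide_le_eq mult_ac)
  qed
  have G_eq: "G s = fx (y0 s) (w s) (D s) + (rem y1 \<alpha>1 s - rem y2 \<alpha>2 s)" for s
    by (simp add: G_def D_def rem_def blinfun.diff_right blinfun.add_right blinfun.scaleR_right algebra_simps)
  have G_le: "norm (G s) \<le> 2 * \<eta> * C + M * norm (D s)" if s: "s \<in> {a..b}" for s
  proof -
    have "norm (fx (y0 s) (w s) (D s)) \<le> M * norm (D s)"
      using norm_blinfun[of "fx (y0 s) (w s)" "D s"] M(2)[OF R[OF s] w[OF s]]
      by (meson mult_right_mono norm_ge_zero order_trans)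
    moreover have "norm (rem y1 \<alpha>1 s) \<le> \<eta> * C" "norm (rem y2 \<alpha>2 s) \<le> \<eta> * C"
      using rem_le[of s \<alpha>1 y1] rem_le[of s \<alpha>2 y2] s \<alpha> close1 close2 by auto
    ultimately show ?thesis
      unfolding G_eq using norm_triangle_ineq[of "fx (y0 s) (w s) (D s)" "rem y1 \<alpha>1 s - rem y2 \<alpha>2 s"]
        norm_triangle_ineq4[of "rem y1 \<alpha>1 s" "rem y2 \<alpha>2 s"] by linarith
  qed
  have G_int: "(G has_integral (D s - D a)) {a..s}" if s: "s \<in> {a..b}" for s
  proof -
    have "((\<lambda>s. f (y s) (w s)) has_integral (y s - y a)) {a..s}"
      if "ode_sol_on f w a b (y a) y" for y
      using that s unfolding ode_sol_on_def by auto
    then have "(G has_integral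
        (inverse \<alpha>1 *\<^sub>R ((y1 s - y1 a) - (y0 s - y0 a)) - inverse \<alpha>2 *\<^sub>R ((y2 s - y2 a) - (y0 s - y0 a)))) {a..s}"
      unfolding G_def using sol0 sol1 sol2 by (intro has_integral_diff has_integral_cmul)
    moreover have "inverse \<alpha>1 *\<^sub>R ((y1 s - y1 a) - (y0 s - y0 a)) - inverse \<alpha>2 *\<^sub>R ((y2 s - y2 a) - (y0 s - y0 a))
        = D s - D a"
      by (simp add: D_def algebra_simps)
    ultimately show ?thesis by simp
  qed
  have "continuous_on {a..b} D"
    using sol0 sol1 sol2 unfolding ode_sol_on_def D_def by (intro continuous_intros) auto
  from integral_gronwall[OF _ this G_int G_le M(1) _ t] show ?thesis
    using t C lin(1) by (simp add: D_def)
qed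

context
  fixes w :: "real \<Rightarrow> 'u" and a b \<epsilon> \<epsilon>1 :: real and \<xi> :: "real \<Rightarrow> real \<Rightarrow> 'x" and z0 :: 'x
  assumes w: "\<And>s. s \<in> {a..b} \<Longrightarrow> w s \<in> cball 0 \<rho>"
    and sols: "\<And>e. e \<in> {\<epsilon>..\<epsilon>1} \<Longrightarrow> ode_sol_on f w a b (\<xi> e a) (\<xi> e)"
    and eps1: "\<epsilon> < \<epsilon>1"
    and init: "((\<lambda>e. \<xi> e a) has_vector_derivative z0) (at_right \<epsilon>)"
begin

lemma eventually_in_perturbation_window: "\<forall>\<^sub>F e in at_right \<epsilon>. e \<in> {\<epsilon><..\<epsilon>1}"
  unfolding eventually_at_right_field using eps1 by (intro exI[of _ \<epsilon>1]) auto

lemma flow_dist_le: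
  assumes "e \<in> {\<epsilon>..\<epsilon>1}" "s \<in> {a..b}"
  shows "norm (\<xi> e s - \<xi> \<epsilon> s) \<le> norm (\<xi> e a - \<xi> \<epsilon> a) * exp (K * (s - a))"
  using ode_sol_on_dist_le[OF sols[OF assms(1)] sols w assms(2)] eps1 by simp

lemma initial_difference_quotient:
  "((\<lambda>e. (\<xi> e a - \<xi> \<epsilon> a) /\<^sub>R (e - \<epsilon>)) \<longlongrightarrow> z0) (at_right \<epsilon>)"
  using init by (simp add: has_vector_derivative_iff_difference_quotient)

lemma flow_difference_eventually_le:
  obtains C where "0 \<le> C" "\<forall>\<^sub>F e in at_right \<epsilon>. \<forall>s\<in>{a..b}. norm (\<xi> e s - \<xi> \<epsilon> s) \<le> C * (e - \<epsilon>)"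
proof
  show "0 \<le> (norm z0 + 1) * exp (K * (b - a))" by simp
  have "\<forall>\<^sub>F e in at_right \<epsilon>. norm ((\<xi> e a - \<xi> \<epsilon> a) /\<^sub>R (e - \<epsilon>)) < norm z0 + 1"
    using tendsto_norm[OF initial_difference_quotient] by (rule order_tendstoD) simp
  with eventually_in_perturbation_window
  show "\<forall>\<^sub>F e in at_right \<epsilon>. \<forall>s\<in>{a..b}. norm (\<xi> e s - \<xi> \<epsilon> s) \<le> (norm z0 + 1) * exp (K * (b - a)) * (e - \<epsilon>)"
  proof eventually_elim
    case (elim e)
    have init_le: "norm (\<xi> e a - \<xi> \<epsilon> a) \<le> (norm z0 + 1) * (e - \<epsilon>)"
      using elim by (simp add: inverse_eq_divide pos_divide_less_eq less_imp_le)
    show ?case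
    proof
      fix s assume s: "s \<in> {a..b}"
      have "norm (\<xi> e s - \<xi> \<epsilon> s) \<le> norm (\<xi> e a - \<xi> \<epsilon> a) * exp (K * (s - a))"
        using flow_dist_le[OF _ s] elim by simp
      also have "\<dots> \<le> ((norm z0 + 1) * (e - \<epsilon>)) * exp (K * (b - a))"
        using init_le s K_nonneg elim by (intro mult_mono) (auto intro: mult_left_mono)
      finally show "norm (\<xi> e s - \<xi> \<epsilon> s) \<le> (norm z0 + 1) * exp (K * (b - a)) * (e - \<epsilon>)"
        by (simp add: mult_ac)
    qed
  qed
qed

lemma flow_difference_quotient_cauchy:
  assumes t: "t \<in> {a..b}"
  shows "cauchy_filter (filtermap (\<lambda>e. (\<xi> e t - \<xi> \<epsilon> t) /\<^sub>R (e - \<epsilon>)) (at_right \<epsilon>))"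
proof -
  define q where "q e s = (\<xi> e s - \<xi> \<epsilon> s) /\<^sub>R (e - \<epsilon>)" for e s
  obtain C where C: "0 \<le> C" "\<forall>\<^sub>F e in at_right \<epsilon>. \<forall>s\<in>{a..b}. norm (\<xi> e s - \<xi> \<epsilon> s) \<le> C * (e - \<epsilon>)"
    using flow_difference_eventually_le by blast
  have sol_eps: "ode_sol_on f w a b (\<xi> \<epsilon> a) (\<xi> \<epsilon>)"
    using sols eps1 by simp
  obtain R where R: "\<And>s. s \<in> {a..b} \<Longrightarrow> norm (\<xi> \<epsilon> s) \<le> R"
    using ode_sol_on_bounded[OF sol_eps] by blast
  obtain M where M: "0 \<le> M" "\<And>x u. norm x \<le> R \<Longrightarrow> u \<in> cball 0 \<rho> \<Longrightarrow> norm (fx x u) \<le> M"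
    using fx_bounded by blast
  define E where "E = exp (M * (b - a))"
  have E: "0 < E" "exp (M * (t - a)) \<le> E"
    using t M(1) by (auto simp: E_def intro: mult_left_mono)
  have "\<exists>P. eventually P (at_right \<epsilon>) \<and> (\<forall>e e'. P e \<and> P e' \<longrightarrow> dist (q e t) (q e' t) < \<eta>)"
    if \<eta>: "0 < \<eta>" for \<eta>
  proof -
    define X where "X = C * (b - a) + 1"
    define \<eta>1 where "\<eta>1 = \<eta> / (8 * E * X)"
    have pos: "0 < X" "C * (b - a) \<le> X" using C(1) t by (auto simp: X_def add_nonneg_pos)
    then have "0 < \<eta>1" using \<eta> E by (simp add: \<eta>1_def)
    then obtain \<delta> where \<delta>: "0 < \<delta>" "\<And>x u h. norm x \<le> R \<Longrightarrow> u \<in> cball 0 \<rho> \<Longrightarrow> norm h < \<delta> \<Longrightarrow>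
        norm (f (x + h) u - f x u - fx x u h) \<le> \<eta>1 * norm h"
      using fx_linearization by blast
    define P where "P e \<longleftrightarrow> e \<in> {\<epsilon><..\<epsilon>1} \<and> (\<forall>s\<in>{a..b}. norm (\<xi> e s - \<xi> \<epsilon> s) \<le> C * (e - \<epsilon>))
        \<and> C * (e - \<epsilon>) < \<delta> \<and> dist (q e a) z0 < \<eta> / (4 * E)" for e
    have "\<forall>\<^sub>F e in at_right \<epsilon>. C * (e - \<epsilon>) < \<delta>"
    proof -
      have "((\<lambda>e. C * (e - \<epsilon>)) \<longlongrightarrow> C * (\<epsilon> - \<epsilon>)) (at_right \<epsilon>)"
        by (intro tendsto_intros)
      then show ?thesis using \<delta>(1) by (intro order_tendstoD(2)) auto
    qed
    moreover have "\<forall>\<^sub>F e in at_right \<epsilon>. dist (q e a) z0 < \<eta> / (4 * E)"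
      using initial_difference_quotient \<eta> E unfolding q_def by (intro tendstoD) auto
    ultimately have "eventually P (at_right \<epsilon>)"
      using eventually_in_perturbation_window C(2) unfolding P_def by eventually_elim auto
    moreover have "dist (q e t) (q e' t) < \<eta>" if P: "P e" "P e'" for e e'
    proof -
      have "norm (q e t - q e' t) \<le> (norm (q e a - q e' a) + 2 * \<eta>1 * C * (b - a)) * exp (M * (t - a))"
        unfolding q_def
        by (rule difference_quotients_gronwall[OF w sol_eps sols sols _ _ R M _ \<delta>(2)])
          (use P C(1) \<open>0 < \<eta>1\<close> t in \<open>auto simp: P_def\<close>)
      also have "\<dots> \<le> (\<eta> / (4 * E) + \<eta> / (4 * E) + \<eta> / (4 * E)) * E"
      proof (intro mult_mono add_mono)
        show "norm (q e a - q e' a) \<le> \<eta> / (4 * E) + \<eta> / (4 * E)"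
          using P dist_triangle[of "q e a" "q e' a" z0] by (auto simp: P_def dist_norm norm_minus_commute)
        have "2 * \<eta>1 * C * (b - a) = \<eta> * (C * (b - a)) / (4 * E * X)"
          using E pos by (simp add: \<eta>1_def field_simps)
        also have "\<dots> \<le> \<eta> * X / (4 * E * X)"
          using \<eta> E pos by (intro divide_right_mono mult_left_mono) auto
        finally show "2 * \<eta>1 * C * (b - a) \<le> \<eta> / (4 * E)"
          using pos by simp
      qed (use E \<eta> in auto)
      also have "\<dots> < \<eta>"
        using E \<eta> by (simp add: field_simps)
      finally show ?thesis by (simp add: dist_norm)
    qed
    ultimately show ?thesis by blast
  qed
  then show ?thesis
    unfolding cauchy_filter_metric_filtermap q_def by blast
qed

lemma flow_right_derivative:
  assumes t: "t \<in> {a..b}"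
  shows "\<exists>z. ((\<lambda>e. \<xi> e t) has_vector_derivative z) (at_right \<epsilon>) \<and> norm z \<le> norm z0 * exp (K * (t - a))"
proof -
  obtain z where z: "((\<lambda>e. (\<xi> e t - \<xi> \<epsilon> t) /\<^sub>R (e - \<epsilon>)) \<longlongrightarrow> z) (at_right \<epsilon>)"
    using cauchy_filter_convergent[OF flow_difference_quotient_cauchy[OF t]]
    by (auto simp: convergent_filter_iff filterlim_def)
  have "norm z \<le> norm z0 * exp (K * (t - a))"
  proof (rule tendsto_le[OF trivial_limit_at_right_real])
    show "((\<lambda>e. norm ((\<xi> e a - \<xi> \<epsilon> a) /\<^sub>R (e - \<epsilon>)) * exp (K * (t - a)))
        \<longlongrightarrow> norm z0 * exp (K * (t - a))) (at_right \<epsilon>)"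
      by (intro tendsto_intros initial_difference_quotient)
    show "((\<lambda>e. norm ((\<xi> e t - \<xi> \<epsilon> t) /\<^sub>R (e - \<epsilon>))) \<longlongrightarrow> norm z) (at_right \<epsilon>)"
      using z by (rule tendsto_norm)
    show "\<forall>\<^sub>F e in at_right \<epsilon>. norm ((\<xi> e t - \<xi> \<epsilon> t) /\<^sub>R (e - \<epsilon>))
        \<le> norm ((\<xi> e a - \<xi> \<epsilon> a) /\<^sub>R (e - \<epsilon>)) * exp (K * (t - a))"
      using eventually_in_perturbation_window
    proof eventually_elim
      case (elim e)
      then show ?case
        using flow_dist_le[OF _ t, of e] by (simp add: inverse_eq_divide divide_right_mono)
    qed
  qed
  with z show ?thesis
    by (auto simp: has_vector_derivative_iff_difference_quotient)
qed

end

end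

section \<open>Needle variations\<close>

locale needle_perturbation = lipschitz_flow f \<rho> K
  for f :: "'x::euclidean_space \<Rightarrow> 'u::real_normed_vector \<Rightarrow> 'x" and \<rho> K +
  fixes u :: "real \<Rightarrow> 'u" and v :: 'u and \<tau> :: real and x0 :: 'x and \<xi> :: "real \<Rightarrow> real \<Rightarrow> 'x"
  assumes u_bounded: "\<And>s. s \<in> {0..1} \<Longrightarrow> u s \<in> cball 0 \<rho>" and v_bounded: "v \<in> cball 0 \<rho>"
    and tau: "0 < \<tau>" "\<tau> \<le> 1"
    and perturbed_sol: "\<And>e. e \<in> {0..\<tau>} \<Longrightarrow> ode_sol_on f (needle u v \<tau> e) 0 1 x0 (\<xi> e)"
begin

lemma needle_bounded: "s \<in> {0..1} \<Longrightarrow> needle u v \<tau> e s \<in> cball 0 \<rho>"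
  using u_bounded v_bounded by (simp add: needle_def)

definition rate_bound :: real where
  "rate_bound = growth_const + K * ((norm x0 + growth_const) * exp K)"

lemma rate_bound_nonneg: "0 \<le> rate_bound"
  using growth_const_nonneg K_nonneg by (simp add: rate_bound_def)

lemma perturbed_rate_le:
  assumes "e \<in> {0..\<tau>}" "s \<in> {0..1}"
  shows "norm (f (\<xi> e s) (needle u v \<tau> e s)) \<le> rate_bound"
proof -
  have "norm (\<xi> e s) \<le> (norm x0 + growth_const) * exp K"
    using ode_sol_on_norm_le[OF perturbed_sol[OF assms(1)] _ _ needle_bounded assms(2)] by simp
  then show ?thesis
    using norm_f_le[OF needle_bounded[OF assms(2)]] K_nonneg unfolding rate_bound_def
    by (meson add_left_mono mult_left_mono order_trans)
qed

lemma perturbed_increment_le: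
  assumes e: "e \<in> {0..\<tau>}" and s: "0 \<le> s" "s \<le> s'" "s' \<le> 1"
  shows "norm (\<xi> e s' - \<xi> e s) \<le> rate_bound * (s' - s)"
proof -
  have "ode_sol_on f (needle u v \<tau> e) s s' (\<xi> e s) (\<xi> e)"
    using ode_sol_on_subinterval[OF perturbed_sol[OF e]] s by simp
  then have "((\<lambda>r. f (\<xi> e r) (needle u v \<tau> e r)) has_integral (\<xi> e s' - \<xi> e s)) {s..s'}"
    using s unfolding ode_sol_on_def by auto
  then have "norm (\<xi> e s' - \<xi> e s) \<le> rate_bound * measure lborel {s..s'}"
    by (rule has_integral_bound_real[OF rate_bound_nonneg finite.emptyI])
      (use perturbed_rate_le[OF e] s in auto)
  then show ?thesis
    using s by simp
qed

lemma perturbed_eq_before_needle: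
  assumes e: "e \<in> {0..\<tau>}" and s: "0 \<le> s" "s \<le> \<tau> - e"
  shows "\<xi> e s = \<xi> 0 s"
proof (rule ode_sol_on_unique)
  have "ode_sol_on f u 0 (\<tau> - e) x0 (\<xi> e')" if e': "e' \<in> {0..e}" for e'
  proof -
    have sol: "ode_sol_on f (needle u v \<tau> e') 0 1 x0 (\<xi> e')"
      using perturbed_sol e e' by simp
    then have "ode_sol_on f (needle u v \<tau> e') 0 (\<tau> - e) x0 (\<xi> e')"
      using ode_sol_on_subinterval[OF sol, of 0 "\<tau> - e"] ode_sol_on_initial[OF sol] tau e by simp
    then show ?thesis
      by (rule ode_sol_on_control_cong[where S = "{}"]) (use e' in \<open>auto simp: needle_def\<close>)
  qed
  then show "ode_sol_on f u 0 (\<tau> - e) x0 (\<xi> e)" "ode_sol_on f u 0 (\<tau> - e) x0 (\<xi> 0)"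
    using e by auto
  show "\<And>r. r \<in> {0..\<tau> - e} \<Longrightarrow> u r \<in> cball 0 \<rho>"
    using u_bounded e tau by auto
qed (use s in auto)

lemma needle_start_agree:
  assumes "0 \<le> \<epsilon>" "\<epsilon> \<le> e" "e \<le> \<tau>"
  shows "\<xi> e (\<tau> - e) = \<xi> \<epsilon> (\<tau> - e)"
  using perturbed_eq_before_needle[of e "\<tau> - e"] perturbed_eq_before_needle[of \<epsilon> "\<tau> - e"] assms
  by simp

context
  fixes \<epsilon> e \<eta> :: real and l :: 'u
  assumes eps: "0 \<le> \<epsilon>" "\<epsilon> < e" "e \<le> \<tau>" and l: "l \<in> cball 0 \<rho>"
    and u_near: "\<And>s. s \<in> {\<tau> - e<..<\<tau> - \<epsilon>} \<Longrightarrow> norm (u s - l) \<le> \<eta>"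
    and \<xi>_near: "\<And>s. s \<in> {\<tau> - e..\<tau> - \<epsilon>} \<Longrightarrow> norm (\<xi> \<epsilon> s - \<xi> \<epsilon> (\<tau> - \<epsilon>)) \<le> \<eta>"
    and short: "rate_bound * (e - \<epsilon>) \<le> \<eta>"
begin

lemma needle_integrand_le:
  assumes s: "s \<in> {\<tau> - e<..<\<tau> - \<epsilon>}"
  shows "norm (f (\<xi> e s) (needle u v \<tau> e s) - f (\<xi> \<epsilon> s) (needle u v \<tau> \<epsilon> s)
              - (f (\<xi> \<epsilon> (\<tau> - \<epsilon>)) v - f (\<xi> \<epsilon> (\<tau> - \<epsilon>)) l)) \<le> 4 * K * \<eta>"
proof -
  define x where "x = \<xi> \<epsilon> (\<tau> - \<epsilon>)"
  have e: "e \<in> {0..\<tau>}" and s01: "0 \<le> \<tau> - e" "s \<le> 1"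
    using eps s tau by auto
  have "norm (\<xi> e s - \<xi> e (\<tau> - e)) \<le> rate_bound * (s - (\<tau> - e))"
    using perturbed_increment_le[OF e] s s01 by simp
  also have "\<dots> \<le> rate_bound * (e - \<epsilon>)"
    using s rate_bound_nonneg by (intro mult_left_mono) auto
  finally have "norm (\<xi> e s - \<xi> \<epsilon> (\<tau> - e)) \<le> \<eta>"
    using short needle_start_agree[of \<epsilon> e] eps by simp
  moreover have "norm (\<xi> \<epsilon> (\<tau> - e) - x) \<le> \<eta>"
    using \<xi>_near[of "\<tau> - e"] eps by (simp add: x_def)
  ultimately have "norm (\<xi> e s - x) \<le> 2 * \<eta>"
    using norm_diff_triangle_le by fastforce
  then have perturbed_part: "norm (f (\<xi> e s) v - f x v) \<le> K * (2 * \<eta>)"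
    using f_lipschitz[of v v "\<xi> e s" x] v_bounded K_nonneg by (simp add: mult_left_mono order_trans)
  have "norm (x - \<xi> \<epsilon> s) \<le> \<eta>" "norm (l - u s) \<le> \<eta>" "u s \<in> cball 0 \<rho>"
    using \<xi>_near[of s] u_near[of s] u_bounded[of s] s s01 by (auto simp: x_def norm_minus_commute)
  then have nominal_part: "norm (f x l - f (\<xi> \<epsilon> s) (u s)) \<le> K * (\<eta> + \<eta>)"
    using f_lipschitz[of l "u s" x "\<xi> \<epsilon> s"] l K_nonneg by (meson add_mono mult_left_mono order_trans)
  have "needle u v \<tau> e s = v" "needle u v \<tau> \<epsilon> s = u s"
    using s eps by (auto simp: needle_def)
  then have "f (\<xi> e s) (needle u v \<tau> e s) - f (\<xi> \<epsilon> s) (needle u v \<tau> \<epsilon> s) - (f x v - f x l)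
      = (f (\<xi> e s) v - f x v) + (f x l - f (\<xi> \<epsilon> s) (u s))"
    by simp
  then have "norm (f (\<xi> e s) (needle u v \<tau> e s) - f (\<xi> \<epsilon> s) (needle u v \<tau> \<epsilon> s) - (f x v - f x l))
      \<le> norm (f (\<xi> e s) v - f x v) + norm (f x l - f (\<xi> \<epsilon> s) (u s))"
    by (simp only: norm_triangle_ineq)
  then show ?thesis
    using perturbed_part nominal_part by (simp add: x_def algebra_simps)
qed

lemma needle_increment_le:
  "norm ((\<xi> e (\<tau> - \<epsilon>) - \<xi> \<epsilon> (\<tau> - \<epsilon>))
         - (e - \<epsilon>) *\<^sub>R (f (\<xi> \<epsilon> (\<tau> - \<epsilon>)) v - f (\<xi> \<epsilon> (\<tau> - \<epsilon>)) l))
    \<le> 4 * K * \<eta> * (e - \<epsilon>)"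
proof -
  define c c' where "c = \<tau> - \<epsilon>" and "c' = \<tau> - e"
  define Z where "Z = f (\<xi> \<epsilon> c) v - f (\<xi> \<epsilon> c) l"
  have cc': "0 \<le> c'" "c' < c" "c \<le> 1" and e: "e \<in> {0..\<tau>}" "\<epsilon> \<in> {0..\<tau>}"
    using eps tau by (auto simp: c_def c'_def)
  have increment: "((\<lambda>s. f (\<xi> e' s) (needle u v \<tau> e' s)) has_integral (\<xi> e' c - \<xi> e' c')) {c'..c}"
    if "e' \<in> {0..\<tau>}" for e'
    using ode_sol_on_subinterval[OF perturbed_sol[OF that], of c' c] cc'
    unfolding ode_sol_on_def by auto
  have "((\<lambda>s. f (\<xi> e s) (needle u v \<tau> e s) - f (\<xi> \<epsilon> s) (needle u v \<tau> \<epsilon> s) - Z)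
      has_integral ((\<xi> e c - \<xi> \<epsilon> c) - (e - \<epsilon>) *\<^sub>R Z)) {c'..c}"
    using has_integral_diff[OF has_integral_diff[OF increment[OF e(1)] increment[OF e(2)]]
        has_integral_const_real[of Z c' c]] needle_start_agree[of \<epsilon> e] eps
    by (simp add: c_def c'_def)
  moreover have "norm (f (\<xi> e s) (needle u v \<tau> e s) - f (\<xi> \<epsilon> s) (needle u v \<tau> \<epsilon> s) - Z) \<le> 4 * K * \<eta>"
    if "s \<in> {c'..c} - {c', c}" for s
    using needle_integrand_le[of s] that by (simp add: Z_def c_def c'_def)
  moreover have "0 \<le> \<eta>"
    using short mult_nonneg_nonneg[OF rate_bound_nonneg, of "e - \<epsilon>"] eps by linarith
  ultimately have "norm ((\<xi> e c - \<xi> \<epsilon> c) - (e - \<epsilon>) *\<^sub>R Z) \<le> 4 * K * \<eta> * measure lborel {c'..c}"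
    using K_nonneg by (intro has_integral_bound_real[where S = "{c', c}"]) auto
  also have "measure lborel {c'..c} = e - \<epsilon>"
    using cc' by (simp add: c_def c'_def)
  finally show ?thesis
    unfolding Z_def c_def .
qed

end

lemma left_limit_bounded:
  assumes "0 < s" "s \<le> 1" "(u \<longlongrightarrow> l) (at_left s)"
  shows "l \<in> cball 0 \<rho>"
proof (rule Lim_in_closed_set[OF closed_cball _ _ assms(3)])
  show "\<forall>\<^sub>F s' in at_left s. u s' \<in> cball 0 \<rho>"
    unfolding eventually_at_left_field using assms u_bounded by (intro exI[of _ 0]) auto
qed (simp add: trivial_limit_at_left_real)

lemma needle_right_derivative:
  assumes eps: "0 \<le> \<epsilon>" "\<epsilon> < \<tau>" and l: "(u \<longlongrightarrow> l) (at_left (\<tau> - \<epsilon>))"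
  shows "((\<lambda>e. \<xi> e (\<tau> - \<epsilon>)) has_vector_derivative
            f (\<xi> \<epsilon> (\<tau> - \<epsilon>)) v - f (\<xi> \<epsilon> (\<tau> - \<epsilon>)) l) (at_right \<epsilon>)"
proof -
  define c where "c = \<tau> - \<epsilon>"
  have c: "0 < c" "c \<le> 1" using eps tau by (auto simp: c_def)
  have "l \<in> cball 0 \<rho>"
    using left_limit_bounded[OF c l[folded c_def]] .
  show ?thesis
    unfolding has_vector_derivative_iff_difference_quotient c_def[symmetric]
  proof (rule tendstoI)
    fix \<eta> :: real assume "0 < \<eta>"
    define \<eta>' where "\<eta>' = \<eta> / (4 * K + 1)"
    have \<eta>': "0 < \<eta>'" "4 * K * \<eta>' < \<eta>"
      using \<open>0 < \<eta>\<close> K_nonneg by (auto simp: \<eta>'_def field_simps)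
    obtain b1 where b1: "b1 < c" "\<And>s. b1 < s \<Longrightarrow> s < c \<Longrightarrow> dist (u s) l < \<eta>'"
      using tendstoD[OF l \<eta>'(1)] unfolding eventually_at_left_field c_def by blast
    obtain d2 where d2: "0 < d2" "\<And>s. s \<in> {0..1} \<Longrightarrow> dist s c < d2 \<Longrightarrow> dist (\<xi> \<epsilon> s) (\<xi> \<epsilon> c) < \<eta>'"
      using perturbed_sol[of \<epsilon>] eps c \<eta>'(1) unfolding ode_sol_on_def continuous_on_iff
      by (metis atLeastAtMost_iff less_eq_real_def)
    define d where "d = min (min (c - b1) d2) (min (\<tau> - \<epsilon>) (\<eta>' / (rate_bound + 1)))"
    have d: "0 < d" using b1 d2 eps \<eta>' rate_bound_nonneg by (simp add: d_def)
    show "\<forall>\<^sub>F e in at_right \<epsilon>. dist ((\<xi> e c - \<xi> \<epsilon> c) /\<^sub>R (e - \<epsilon>)) (f (\<xi> \<epsilon> c) v - f (\<xi> \<epsilon> c) l) < \<eta>"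
      unfolding eventually_at_right_field
    proof (intro exI[of _ "\<epsilon> + d"] conjI allI impI)
      fix e assume e: "\<epsilon> < e" "e < \<epsilon> + d"
      then have small: "e - \<epsilon> < c - b1" "e - \<epsilon> < d2" "e < \<tau>" "e - \<epsilon> < \<eta>' / (rate_bound + 1)"
        by (auto simp: d_def c_def)
      have "rate_bound * (e - \<epsilon>) \<le> rate_bound * (\<eta>' / (rate_bound + 1))"
        using small rate_bound_nonneg by (intro mult_left_mono) auto
      also have "\<dots> \<le> \<eta>'"
        using rate_bound_nonneg \<eta>' by (simp add: field_simps)
      finally have "norm ((\<xi> e c - \<xi> \<epsilon> c) - (e - \<epsilon>) *\<^sub>R (f (\<xi> \<epsilon> c) v - f (\<xi> \<epsilon> c) l))
          \<le> 4 * K * \<eta>' * (e - \<epsilon>)"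
        unfolding c_def
      proof (intro needle_increment_le \<open>l \<in> cball 0 \<rho>\<close>)
        show "0 \<le> \<epsilon>" "\<epsilon> < e" "e \<le> \<tau>" using eps e small by auto
        show "norm (u s - l) \<le> \<eta>'" if "s \<in> {\<tau> - e<..<\<tau> - \<epsilon>}" for s
          using b1(2)[of s] that small by (auto simp: c_def dist_norm)
        show "norm (\<xi> \<epsilon> s - \<xi> \<epsilon> (\<tau> - \<epsilon>)) \<le> \<eta>'" if "s \<in> {\<tau> - e..\<tau> - \<epsilon>}" for s
          using d2(2)[of s] that small c by (auto simp: c_def dist_norm)
      qed
      then have "norm ((\<xi> e c - \<xi> \<epsilon> c) /\<^sub>R (e - \<epsilon>) - (f (\<xi> \<epsilon> c) v - f (\<xi> \<epsilon> c) l)) \<le> 4 * K * \<eta>'"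
        using e by (intro norm_difference_quotient_le) auto
      then show "dist ((\<xi> e c - \<xi> \<epsilon> c) /\<^sub>R (e - \<epsilon>)) (f (\<xi> \<epsilon> c) v - f (\<xi> \<epsilon> c) l) < \<eta>"
        using \<eta>'(2) by (simp add: dist_norm)
    qed (use d in simp)
  qed
qed

end

section \<open>Polynomial growth in the observations\<close>

definition poly_weight :: "nat \<Rightarrow> nat \<Rightarrow> (nat \<Rightarrow> real) \<Rightarrow> real" where
  "poly_weight n N r = (\<Prod>m<n. (1 + r (Suc m)) ^ N)"

definition poly_bounded :: "nat \<Rightarrow> ((nat \<Rightarrow> real) \<Rightarrow> real) \<Rightarrow> bool" where
  "poly_bounded n F \<longleftrightarrow>
     (\<forall>r. (\<forall>m. 0 \<le> r m) \<longrightarrow> 0 \<le> F r) \<and>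
     (\<exists>C N. 0 \<le> C \<and> (\<forall>r. (\<forall>m. 0 \<le> r m) \<longrightarrow> F r \<le> C * poly_weight n N r))"

lemma one_le_one_plus_nonneg: "\<forall>m. 0 \<le> r m \<Longrightarrow> 1 \<le> 1 + r m" for r :: "nat \<Rightarrow> real"
  by (simp add: add_increasing2)

lemma poly_weight_mono_exponent: "\<forall>m. 0 \<le> r m \<Longrightarrow> N \<le> N' \<Longrightarrow> poly_weight n N r \<le> poly_weight n N' r"
  unfolding poly_weight_def
  by (intro prod_mono conjI power_increasing one_le_one_plus_nonneg) (auto intro: order_trans[OF zero_le_one])

lemma poly_weight_mono_length: "\<forall>m. 0 \<le> r m \<Longrightarrow> n \<le> n' \<Longrightarrow> poly_weight n N r \<le> poly_weight n' N r"
  unfolding poly_weight_def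
  by (intro prod_mono2 one_le_power one_le_one_plus_nonneg) (auto intro: order_trans[OF zero_le_one])

lemma poly_weight_mult: "poly_weight n N r * poly_weight n N' r = poly_weight n (N + N') r"
  unfolding poly_weight_def by (simp add: power_add prod.distrib)

lemma poly_boundedI:
  "(\<And>r. (\<forall>m. 0 \<le> r m) \<Longrightarrow> 0 \<le> F r) \<Longrightarrow> 0 \<le> C \<Longrightarrow> (\<And>r. (\<forall>m. 0 \<le> r m) \<Longrightarrow> F r \<le> C * poly_weight n N r)
    \<Longrightarrow> poly_bounded n F"
  unfolding poly_bounded_def by blast

lemma poly_bounded_nonneg: "poly_bounded n F \<Longrightarrow> \<forall>m. 0 \<le> r m \<Longrightarrow> 0 \<le> F r"
  unfolding poly_bounded_def by blast

lemma poly_bounded_const: "0 \<le> c \<Longrightarrow> poly_bounded n (\<lambda>r. c)"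
  by (rule poly_boundedI[where C = c and N = 0]) (auto simp: poly_weight_def)

lemma poly_bounded_component:
  assumes "1 \<le> k" "k \<le> n"
  shows "poly_bounded n (\<lambda>r. r k)"
proof (rule poly_boundedI[where C = 1 and N = 1])
  fix r :: "nat \<Rightarrow> real" assume r: "\<forall>m. 0 \<le> r m"
  then show "0 \<le> r k" by simp
  have "r k \<le> (\<Prod>m\<in>{k - 1}. 1 + r (Suc m))"
    using assms by simp
  also have "\<dots> \<le> (\<Prod>m<n. 1 + r (Suc m))"
    using assms r by (intro prod_mono2 one_le_one_plus_nonneg) (auto intro: order_trans[OF zero_le_one])
  finally show "r k \<le> 1 * poly_weight n 1 r" by (simp add: poly_weight_def)
qed simp

lemma poly_bounded_add:
  assumes F: "poly_bounded n F" and G: "poly_bounded n G"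
  shows "poly_bounded n (\<lambda>r. F r + G r)"
proof -
  obtain C1 N1 where 1: "0 \<le> C1" "\<And>r. (\<forall>m. 0 \<le> r m) \<Longrightarrow> F r \<le> C1 * poly_weight n N1 r"
    using F unfolding poly_bounded_def by blast
  obtain C2 N2 where 2: "0 \<le> C2" "\<And>r. (\<forall>m. 0 \<le> r m) \<Longrightarrow> G r \<le> C2 * poly_weight n N2 r"
    using G unfolding poly_bounded_def by blast
  show ?thesis
  proof (rule poly_boundedI[where C = "C1 + C2" and N = "N1 + N2"])
    fix r :: "nat \<Rightarrow> real" assume r: "\<forall>m. 0 \<le> r m"
    show "0 \<le> F r + G r"
      using poly_bounded_nonneg[OF F r] poly_bounded_nonneg[OF G r] by simp
    have "F r \<le> C1 * poly_weight n (N1 + N2) r" "G r \<le> C2 * poly_weight n (N1 + N2) r"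
      using 1 2 r poly_weight_mono_exponent[OF r, of N1 "N1 + N2" n] poly_weight_mono_exponent[OF r, of N2 "N1 + N2" n]
      by (meson le_add1 le_add2 mult_left_mono order_trans)+
    then show "F r + G r \<le> (C1 + C2) * poly_weight n (N1 + N2) r"
      by (simp add: distrib_right)
  qed (use 1 2 in auto)
qed

lemma poly_bounded_mult:
  assumes F: "poly_bounded n F" and G: "poly_bounded n G"
  shows "poly_bounded n (\<lambda>r. F r * G r)"
proof -
  obtain C1 N1 where 1: "0 \<le> C1" "\<And>r. (\<forall>m. 0 \<le> r m) \<Longrightarrow> F r \<le> C1 * poly_weight n N1 r"
    using F unfolding poly_bounded_def by blast
  obtain C2 N2 where 2: "0 \<le> C2" "\<And>r. (\<forall>m. 0 \<le> r m) \<Longrightarrow> G r \<le> C2 * poly_weight n N2 r"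
    using G unfolding poly_bounded_def by blast
  show ?thesis
  proof (rule poly_boundedI[where C = "C1 * C2" and N = "N1 + N2"])
    fix r :: "nat \<Rightarrow> real" assume r: "\<forall>m. 0 \<le> r m"
    show "0 \<le> F r * G r"
      using poly_bounded_nonneg[OF F r] poly_bounded_nonneg[OF G r] by simp
    have "F r * G r \<le> (C1 * poly_weight n N1 r) * (C2 * poly_weight n N2 r)"
      using 1(2)[OF r] 2(2)[OF r] poly_bounded_nonneg[OF F r] poly_bounded_nonneg[OF G r]
      by (intro mult_mono) auto
    then show "F r * G r \<le> (C1 * C2) * poly_weight n (N1 + N2) r"
      by (simp add: poly_weight_mult[symmetric] ac_simps)
  qed (use 1 2 in auto)
qed

lemma poly_bounded_power: "poly_bounded n F \<Longrightarrow> poly_bounded n (\<lambda>r. F r ^ k)"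
  by (induction k) (auto intro: poly_bounded_mult poly_bounded_const)

lemma poly_bounded_Suc:
  assumes F: "poly_bounded n F"
  shows "poly_bounded (Suc n) F"
proof -
  obtain C N where C: "0 \<le> C" "\<And>r. (\<forall>m. 0 \<le> r m) \<Longrightarrow> F r \<le> C * poly_weight n N r"
    using F unfolding poly_bounded_def by blast
  show ?thesis
  proof (rule poly_boundedI[where C = C and N = N])
    fix r :: "nat \<Rightarrow> real" assume r: "\<forall>m. 0 \<le> r m"
    show "F r \<le> C * poly_weight (Suc n) N r"
      using C(2)[OF r] mult_left_mono[OF poly_weight_mono_length[where n = n and N = N, OF r le_SucI[OF order_refl]] C(1)]
      by linarith
  qed (use poly_bounded_nonneg[OF F] C in auto)
qed

lemma prod_sum_powers_eq_sum_lists: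
  fixes x :: "nat \<Rightarrow> real"
  assumes "finite K"
  shows "(\<Prod>m<n. \<Sum>k\<in>K. x m ^ k) = (\<Sum>js\<in>{js. set js \<subseteq> K \<and> length js = n}. \<Prod>m<n. x m ^ (js ! m))"
proof (induction n arbitrary: x)
  case 0
  have "{js. set js \<subseteq> K \<and> length js = 0} = {[]}" by auto
  then show ?case by simp
next
  case (Suc n)
  let ?L = "{js. set js \<subseteq> K \<and> length js = n}"
  have "(\<Prod>m<Suc n. \<Sum>k\<in>K. x m ^ k) = (\<Sum>k\<in>K. x 0 ^ k) * (\<Prod>m<n. \<Sum>k\<in>K. x (Suc m) ^ k)"
    by (rule prod.lessThan_Suc_shift)
  also have "\<dots> = (\<Sum>k\<in>K. x 0 ^ k) * (\<Sum>js\<in>?L. \<Prod>m<n. x (Suc m) ^ (js ! m))"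
    using Suc.IH[of "\<lambda>m. x (Suc m)"] by simp
  also have "\<dots> = (\<Sum>(js, k)\<in>?L \<times> K. x 0 ^ k * (\<Prod>m<n. x (Suc m) ^ (js ! m)))"
    by (simp add: sum_product sum.cartesian_product[symmetric] sum.swap[of _ K])
  also have "\<dots> = (\<Sum>(js, k)\<in>?L \<times> K. \<Prod>m<Suc n. x m ^ ((k # js) ! m))"
    by (intro sum.cong refl) (auto simp del: prod.lessThan_Suc simp add: prod.lessThan_Suc_shift)
  also have "\<dots> = (\<Sum>js\<in>(\<lambda>(js, k). k # js) ` (?L \<times> K). \<Prod>m<Suc n. x m ^ (js ! m))"
    by (subst sum.reindex) (auto simp: inj_on_def case_prod_beta)
  also have "(\<lambda>(js, k). k # js) ` (?L \<times> K) = {js. set js \<subseteq> K \<and> length js = Suc n}"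
    by (rule lists_length_Suc_eq[symmetric])
  finally show ?case .
qed

lemma one_plus_power_le: "0 \<le> (x::real) \<Longrightarrow> (1 + x) ^ N \<le> 2 ^ N * (1 + x ^ N)"
proof (cases "x \<le> 1")
  case True
  assume "0 \<le> x"
  with True have "(1 + x) ^ N \<le> 2 ^ N" by (intro power_mono) auto
  then show ?thesis using \<open>0 \<le> x\<close> by (simp add: order_trans)
next
  case False
  then have "(1 + x) ^ N \<le> (2 * x) ^ N" by (intro power_mono) auto
  then show ?thesis by (simp add: power_mult_distrib order_trans)
qed

lemma poly_bounded_monomial_sum:
  assumes "poly_bounded n F"
  shows "\<exists>L \<beta>. finite L \<and> (\<forall>js\<in>L. length js = n \<and> 0 < \<beta> js) \<and>
     (\<forall>r. (\<forall>m. 0 \<le> r m) \<longrightarrow> F r \<le> (\<Sum>js\<in>L. \<beta> js * (\<Prod>m<n. r (m + 1) ^ (js ! m))))"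
proof -
  obtain C N0 where C0: "0 \<le> C" "\<And>r. (\<forall>m. 0 \<le> r m) \<Longrightarrow> F r \<le> C * poly_weight n N0 r"
    using assms unfolding poly_bounded_def by blast
  define N where "N = Suc N0"
  then have "0 < N" by simp
  have C: "F r \<le> C * poly_weight n N r" if r: "\<forall>m. 0 \<le> r m" for r
  proof -
    have "poly_weight n N0 r \<le> poly_weight n N r"
      using poly_weight_mono_exponent[OF r] by (simp add: N_def)
    then show ?thesis
      using C0(2)[OF r] mult_left_mono[OF _ C0(1)] by (meson order_trans)
  qed
  define L where "L = {js. set js \<subseteq> {0, N} \<and> length js = n}"
  define B where "B = (C + 1) * 2 ^ (N * n)"
  have bound: "F r \<le> (\<Sum>js\<in>L. B * (\<Prod>m<n. r (m + 1) ^ (js ! m)))" if r: "\<forall>m. 0 \<le> r m" for r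
  proof -
    have r0: "0 \<le> r m" for m using r by simp
    have "poly_weight n N r \<le> (\<Prod>m<n. 2 ^ N * (1 + r (Suc m) ^ N))"
      unfolding poly_weight_def using r0 by (intro prod_mono conjI one_plus_power_le) auto
    also have "\<dots> = 2 ^ (N * n) * (\<Prod>m<n. \<Sum>k\<in>{0, N}. r (Suc m) ^ k)"
      using \<open>0 < N\<close> by (simp add: prod.distrib power_mult)
    also have "\<dots> = 2 ^ (N * n) * (\<Sum>js\<in>L. \<Prod>m<n. r (m + 1) ^ (js ! m))"
      unfolding L_def using prod_sum_powers_eq_sum_lists[where K = "{0, N}" and x = "\<lambda>m. r (Suc m)"] by simp
    finally have "F r \<le> C * (2 ^ (N * n) * (\<Sum>js\<in>L. \<Prod>m<n. r (m + 1) ^ (js ! m)))"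
      using C[OF r] C0(1) by (meson mult_left_mono order_trans)
    also have "\<dots> \<le> B * (\<Sum>js\<in>L. \<Prod>m<n. r (m + 1) ^ (js ! m))"
    proof -
      have "0 \<le> 2 ^ (N * n) * (\<Sum>js\<in>L. \<Prod>m<n. r (m + 1) ^ (js ! m))"
        using r0 by (simp add: sum_nonneg prod_nonneg)
      then show ?thesis
        unfolding B_def mult.assoc by (rule mult_right_mono[rotated]) simp
    qed
    finally show ?thesis by (simp add: sum_distrib_left)
  qed
  have "finite L"
    unfolding L_def by (rule finite_lists_length_eq) simp
  moreover have "\<forall>js\<in>L. length js = n \<and> 0 < B"
    using C0(1) by (simp add: L_def B_def add_nonneg_pos)
  ultimately show ?thesis
    using bound by (intro exI[of _ L] exI[of _ "\<lambda>_. B"]) simp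
qed

section \<open>The hybrid system\<close>

locale hybrid_cost_problem = C1_lipschitz_flow f \<rho> K1 fx
  for f :: "'x::euclidean_space \<Rightarrow> 'u::euclidean_space \<Rightarrow> 'x" and \<rho> K1 fx +
  fixes g :: "'x \<Rightarrow> 'y::real_normed_vector \<Rightarrow> 'x" and g' :: "'x \<Rightarrow> 'y \<Rightarrow> 'x \<Rightarrow>\<^sub>L 'x"
    and c :: "'x \<Rightarrow> 'u \<Rightarrow> real" and c' :: "'x \<Rightarrow> 'u \<Rightarrow> 'x \<Rightarrow>\<^sub>L real"
    and h :: "'x \<Rightarrow> real" and h' :: "'x \<Rightarrow> 'x \<Rightarrow>\<^sub>L real"
    and K2 K3 K4 K5 K6 K7 :: real and L1 L2 L3 T :: nat and x0 :: 'x and \<tau> :: real and v :: 'u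
  assumes g_diff: "\<And>x y. ((\<lambda>z. g z y) has_derivative blinfun_apply (g' x y)) (at x)"
    and K2345: "0 \<le> K2" "0 \<le> K3" "0 \<le> K4" "0 \<le> K5"
    and g_bound: "\<And>x y. norm (g x y) \<le> K2 + K3 * norm x ^ L1 + K4 * norm y ^ L2
                                        + K5 * norm x ^ L1 * norm y ^ L2"
    and g'_bound: "\<And>x y. norm (g' x y) \<le> K2 + K3 * norm x ^ L1 + K4 * norm y ^ L2
                                        + K5 * norm x ^ L1 * norm y ^ L2"
    and c_diff: "\<And>x u. ((\<lambda>z. c z u) has_derivative blinfun_apply (c' x u)) (at x)"
    and h_diff: "\<And>x. (h has_derivative blinfun_apply (h' x)) (at x)"
    and K67: "0 \<le> K6" "0 \<le> K7"
    and c'_bound: "\<And>x u. u \<in> cball 0 \<rho> \<Longrightarrow> norm (c' x u) \<le> K6 + K7 * norm x ^ L3"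
    and h'_bound: "\<And>x. norm (h' x) \<le> K6 + K7 * norm x ^ L3"
    and T_pos: "0 < T" and tau: "0 < \<tau>" "\<tau> < 1" and v_bounded: "v \<in> cball 0 \<rho>"
begin

definition jump_bound :: "real \<Rightarrow> real \<Rightarrow> real" where
  "jump_bound x y = K2 + K3 * x ^ L1 + K4 * y ^ L2 + K5 * x ^ L1 * y ^ L2"

lemma jump_bound_nonneg: "0 \<le> x \<Longrightarrow> 0 \<le> y \<Longrightarrow> 0 \<le> jump_bound x y"
  unfolding jump_bound_def using K2345 by simp

lemma jump_bound_mono: "0 \<le> x \<Longrightarrow> x \<le> x' \<Longrightarrow> 0 \<le> y \<Longrightarrow> jump_bound x y \<le> jump_bound x' y"
  unfolding jump_bound_def using K2345
  by (intro add_mono order_refl mult_left_mono mult_right_mono power_mono) auto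

lemma norm_jump_le: "norm x \<le> B \<Longrightarrow> norm (g x y) \<le> jump_bound B (norm y)"
  using g_bound[of x y] jump_bound_mono[of "norm x" B "norm y"] by (simp add: jump_bound_def)

lemma norm_jump_deriv_le: "norm x \<le> B \<Longrightarrow> norm (g' x y) \<le> jump_bound B (norm y)"
  using g'_bound[of x y] jump_bound_mono[of "norm x" B "norm y"] by (simp add: jump_bound_def)

text \<open>For a sequence \<open>r\<close> of observation norms, \<open>state_bound k r\<close> bounds the state and
  \<open>deriv_bound k r\<close> the right derivative with respect to the needle width on the mode
  living on \<open>[k, k + 1]\<close>.\<close>

primrec state_bound :: "nat \<Rightarrow> (nat \<Rightarrow> real) \<Rightarrow> real" where
  "state_bound 0 r = (norm x0 + growth_const) * exp K1"
| "state_bound (Suc k) r = (jump_bound (state_bound k r) (r (Suc k)) + growth_const) * exp K1"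

primrec deriv_bound :: "nat \<Rightarrow> (nat \<Rightarrow> real) \<Rightarrow> real" where
  "deriv_bound 0 r = 2 * K1 * \<rho> * exp K1"
| "deriv_bound (Suc k) r = jump_bound (state_bound k r) (r (Suc k)) * deriv_bound k r * exp K1"

definition cost_bound :: "nat \<Rightarrow> (nat \<Rightarrow> real) \<Rightarrow> real" where
  "cost_bound k r = (K6 + K7 * state_bound k r ^ L3) * deriv_bound k r"

lemma poly_bounded_jump_bound:
  assumes "poly_bounded n F" "1 \<le> k" "k \<le> n"
  shows "poly_bounded n (\<lambda>r. jump_bound (F r) (r k))"
  unfolding jump_bound_def using K2345
  by (intro poly_bounded_add poly_bounded_mult poly_bounded_const poly_bounded_power
      poly_bounded_component assms)

lemma poly_bounded_state_bound: "poly_bounded k (state_bound k)"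
proof (induction k)
  case 0
  show ?case using growth_const_nonneg by (simp add: poly_bounded_const)
next
  case (Suc k)
  have "poly_bounded (Suc k) (\<lambda>r. jump_bound (state_bound k r) (r (Suc k)))"
    by (rule poly_bounded_jump_bound[OF poly_bounded_Suc[OF Suc.IH]]) auto
  then show ?case
    using growth_const_nonneg by (simp add: poly_bounded_add poly_bounded_mult poly_bounded_const)
qed

lemma poly_bounded_deriv_bound: "poly_bounded k (deriv_bound k)"
proof (induction k)
  case 0
  show ?case using rho_nonneg K_nonneg by (simp add: poly_bounded_const)
next
  case (Suc k)
  have "poly_bounded (Suc k) (\<lambda>r. jump_bound (state_bound k r) (r (Suc k)))"
    by (rule poly_bounded_jump_bound[OF poly_bounded_Suc[OF poly_bounded_state_bound]]) auto
  then show ?case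
    using poly_bounded_Suc[OF Suc.IH] by (simp add: poly_bounded_mult poly_bounded_const)
qed

lemma poly_bounded_cost_bound: "poly_bounded k (cost_bound k)"
  unfolding cost_bound_def using K67
  by (intro poly_bounded_mult poly_bounded_add poly_bounded_const poly_bounded_power
      poly_bounded_state_bound poly_bounded_deriv_bound) auto

lemma cost_bound_monomial_sums:
  obtains L :: "nat \<Rightarrow> nat list set" and \<beta> :: "nat \<Rightarrow> nat list \<Rightarrow> real"
  where "\<And>i. i \<in> {2..T+1} \<Longrightarrow> finite (L i) \<and> (\<forall>js\<in>L i. length js = i - 1 \<and> 0 < \<beta> i js)"
    and "\<And>i r. i \<in> {2..T+1} \<Longrightarrow> \<forall>m. 0 \<le> r m \<Longrightarrow>
           cost_bound (i - 1) r \<le> (\<Sum>js\<in>L i. \<beta> i js * (\<Prod>m<i - 1. r (m + 1) ^ (js ! m)))"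
proof -
  have "\<forall>i\<in>{2..T+1}. \<exists>Li \<beta>i. finite Li \<and> (\<forall>js\<in>Li. length js = i - 1 \<and> 0 < \<beta>i js) \<and>
      (\<forall>r. (\<forall>m. 0 \<le> r m) \<longrightarrow> cost_bound (i - 1) r \<le> (\<Sum>js\<in>Li. \<beta>i js * (\<Prod>m<i - 1. r (m + 1) ^ (js ! m))))"
    by (intro ballI poly_bounded_monomial_sum poly_bounded_cost_bound)
  then have "\<exists>L. \<forall>i\<in>{2..T+1}. \<exists>\<beta>i. finite (L i) \<and> (\<forall>js\<in>L i. length js = i - 1 \<and> 0 < \<beta>i js) \<and>
      (\<forall>r. (\<forall>m. 0 \<le> r m) \<longrightarrow> cost_bound (i - 1) r \<le> (\<Sum>js\<in>L i. \<beta>i js * (\<Prod>m<i - 1. r (m + 1) ^ (js ! m))))"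
    by (rule bchoice)
  then obtain L where "\<forall>i\<in>{2..T+1}. \<exists>\<beta>i. finite (L i) \<and> (\<forall>js\<in>L i. length js = i - 1 \<and> 0 < \<beta>i js) \<and>
      (\<forall>r. (\<forall>m. 0 \<le> r m) \<longrightarrow> cost_bound (i - 1) r \<le> (\<Sum>js\<in>L i. \<beta>i js * (\<Prod>m<i - 1. r (m + 1) ^ (js ! m))))" ..
  then have "\<exists>\<beta>. \<forall>i\<in>{2..T+1}. finite (L i) \<and> (\<forall>js\<in>L i. length js = i - 1 \<and> 0 < \<beta> i js) \<and>
      (\<forall>r. (\<forall>m. 0 \<le> r m) \<longrightarrow> cost_bound (i - 1) r \<le> (\<Sum>js\<in>L i. \<beta> i js * (\<Prod>m<i - 1. r (m + 1) ^ (js ! m))))"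
    by (rule bchoice)
  then obtain \<beta> where \<beta>: "\<forall>i\<in>{2..T+1}. finite (L i) \<and> (\<forall>js\<in>L i. length js = i - 1 \<and> 0 < \<beta> i js) \<and>
      (\<forall>r. (\<forall>m. 0 \<le> r m) \<longrightarrow> cost_bound (i - 1) r \<le> (\<Sum>js\<in>L i. \<beta> i js * (\<Prod>m<i - 1. r (m + 1) ^ (js ! m))))" ..
  show thesis
  proof (rule that)
    fix i assume "i \<in> {2..T+1}"
    then show "finite (L i) \<and> (\<forall>js\<in>L i. length js = i - 1 \<and> 0 < \<beta> i js)"
      using bspec[OF \<beta>] by simp
    fix r :: "nat \<Rightarrow> real" assume "\<forall>m. 0 \<le> r m"
    with \<open>i \<in> {2..T+1}\<close> show "cost_bound (i - 1) r \<le> (\<Sum>js\<in>L i. \<beta> i js * (\<Prod>m<i - 1. r (m + 1) ^ (js ! m)))"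
      using bspec[OF \<beta>] by simp
  qed
qed

lemma jump_right_derivative:
  assumes "(\<zeta> has_vector_derivative z) (at_right \<epsilon>)" "norm (\<zeta> \<epsilon>) \<le> B" "norm z \<le> Bz"
  shows "\<exists>z'. ((\<lambda>e. g (\<zeta> e) y) has_vector_derivative z') (at_right \<epsilon>) \<and> norm z' \<le> jump_bound B (norm y) * Bz"
proof (intro exI conjI)
  show "((\<lambda>e. g (\<zeta> e) y) has_vector_derivative g' (\<zeta> \<epsilon>) y z) (at_right \<epsilon>)"
    by (rule has_vector_derivative_blinfun_compose[OF assms(1) g_diff])
  have "0 \<le> jump_bound B (norm y)"
    using assms(2) by (intro jump_bound_nonneg) (auto intro: order_trans[OF norm_ge_zero])
  then show "norm (g' (\<zeta> \<epsilon>) y z) \<le> jump_bound B (norm y) * Bz"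
    using norm_blinfun[of "g' (\<zeta> \<epsilon>) y" z] norm_jump_deriv_le[OF assms(2), of y] assms(3)
    by (meson mult_mono norm_ge_zero order_trans)
qed

lemma cost_compose_right_derivative:
  fixes \<psi> :: "'x \<Rightarrow> real"
  assumes "(\<phi> has_vector_derivative z) (at_right \<epsilon>)" "(\<psi> has_derivative blinfun_apply \<Psi>) (at (\<phi> \<epsilon>))"
    and "norm \<Psi> \<le> K6 + K7 * norm (\<phi> \<epsilon>) ^ L3" "norm (\<phi> \<epsilon>) \<le> B" "norm z \<le> Bz"
  shows "\<exists>D. ((\<lambda>e. \<psi> (\<phi> e)) has_real_derivative D) (at_right \<epsilon>) \<and> \<bar>D\<bar> \<le> (K6 + K7 * B ^ L3) * Bz"
proof -
  have "K6 + K7 * norm (\<phi> \<epsilon>) ^ L3 \<le> K6 + K7 * B ^ L3"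
    using assms(4) K67 by (intro add_left_mono mult_left_mono power_mono) auto
  with assms(3) obtain D where D: "((\<lambda>e. \<psi> (\<phi> e)) has_real_derivative D) (at_right \<epsilon>)"
    "\<bar>D\<bar> \<le> (K6 + K7 * B ^ L3) * norm z"
    using has_real_derivative_compose_norm_le[OF assms(1,2)] by (meson order_trans)
  moreover have "0 \<le> K6 + K7 * B ^ L3"
    using K67 assms(4) by (simp add: order_trans[OF norm_ge_zero])
  ultimately show ?thesis
    using assms(5) by (meson mult_left_mono order_trans)
qed

end

locale needle_perturbed_hybrid =
  hybrid_cost_problem f \<rho> K1 fx g g' c c' h h' K2 K3 K4 K5 K6 K7 L1 L2 L3 T x0 \<tau> v
  for f :: "'x::euclidean_space \<Rightarrow> 'u::euclidean_space \<Rightarrow> 'x" and \<rho> K1 fx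
    and g :: "'x \<Rightarrow> 'y::real_normed_vector \<Rightarrow> 'x" and g' c c' h h' K2 K3 K4 K5 K6 K7 L1 L2 L3 T x0 \<tau> v +
  fixes u :: "real \<Rightarrow> 'u" and ys :: "nat \<Rightarrow> 'y" and \<epsilon> :: real and X :: "real \<Rightarrow> nat \<Rightarrow> real \<Rightarrow> 'x"
  assumes u_admissible: "u \<in> admissible_controls T \<rho>"
    and eps: "0 \<le> \<epsilon>" "\<epsilon> < \<tau>"
    and modes: "\<And>e. e \<in> {0..\<tau>} \<Longrightarrow> hybrid_modes f g T x0 ys (needle u v \<tau> e) (X e)"
begin

definition ynorm :: "nat \<Rightarrow> real" where
  "ynorm m = norm (ys m)"

lemma u_bounded: "s \<in> {0..real T} \<Longrightarrow> u s \<in> cball 0 \<rho>"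
  using u_admissible by (simp add: admissible_controls_def)

lemma first_mode_sol: "e \<in> {0..\<tau>} \<Longrightarrow> ode_sol_on f (needle u v \<tau> e) 0 1 x0 (X e 1)"
  using modes by (simp add: hybrid_modes_def)

lemma later_mode_sol:
  assumes "e \<in> {0..\<tau>}" "i \<in> {2..T}"
  shows "ode_sol_on f u (real i - 1) (real i) (g (X e (i - 1) (real i - 1)) (ys (i - 1))) (X e i)"
proof -
  have "ode_sol_on f (needle u v \<tau> e) (real i - 1) (real i) (g (X e (i - 1) (real i - 1)) (ys (i - 1))) (X e i)"
    using modes[OF assms(1)] assms(2) by (simp add: hybrid_modes_def)
  then show ?thesis
    by (rule ode_sol_on_control_cong[where S = "{}"]) (use assms(2) tau in \<open>auto simp: needle_def\<close>)
qed

sublocale first_mode: needle_perturbation f \<rho> K1 u v \<tau> x0 "\<lambda>e. X e 1"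
  by unfold_locales (use u_bounded T_pos tau v_bounded first_mode_sol in auto)

lemma first_mode_right_derivative:
  assumes t: "t \<in> {\<tau> - \<epsilon>..1}"
  shows "\<exists>z. ((\<lambda>e. X e 1 t) has_vector_derivative z) (at_right \<epsilon>) \<and> norm z \<le> deriv_bound 0 ynorm"
proof -
  define a where "a = \<tau> - \<epsilon>"
  have a: "0 < a" "a \<le> 1" using eps tau by (auto simp: a_def)
  obtain l where l: "(u \<longlongrightarrow> l) (at_left a)"
    using admissible_control_left_limit[OF u_admissible, of a] a T_pos by auto
  have l_bounded: "l \<in> cball 0 \<rho>"
    using first_mode.left_limit_bounded[OF a l] .
  define x where "x = X \<epsilon> 1 a"
  define w where "w s = (if s \<le> \<tau> then v else u s)" for s
  have init: "((\<lambda>e. X e 1 a) has_vector_derivative f x v - f x l) (at_right \<epsilon>)"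
    using first_mode.needle_right_derivative[OF eps l[unfolded a_def]] by (simp add: x_def a_def)
  have sols: "ode_sol_on f w a 1 (X e 1 a) (X e 1)" if e: "e \<in> {\<epsilon>..\<tau>}" for e
  proof -
    have "ode_sol_on f (needle u v \<tau> e) a 1 (X e 1 a) (X e 1)"
      using ode_sol_on_subinterval[OF first_mode_sol, of e a 1] e eps a by auto
    then show ?thesis
      by (rule ode_sol_on_control_cong[where S = "{a}"]) (use e in \<open>auto simp: needle_def w_def a_def\<close>)
  qed
  have w_bounded: "\<And>s. s \<in> {a..1} \<Longrightarrow> w s \<in> cball 0 \<rho>"
    using u_bounded v_bounded a T_pos by (auto simp: w_def)
  obtain z where z: "((\<lambda>e. X e 1 t) has_vector_derivative z) (at_right \<epsilon>)"
    "norm z \<le> norm (f x v - f x l) * exp (K1 * (t - a))"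
    using flow_right_derivative[OF w_bounded sols eps(2) init] t by (auto simp: a_def)
  have "norm (f x v - f x l) \<le> K1 * (2 * \<rho>)"
  proof -
    have "norm (v - l) \<le> 2 * \<rho>"
      using norm_triangle_ineq4[of v l] v_bounded l_bounded by simp
    then show ?thesis
      using f_lipschitz[OF v_bounded l_bounded, of x x] K_nonneg by (simp add: mult_left_mono order_trans)
  qed
  moreover have "exp (K1 * (t - a)) \<le> exp K1"
    using t a K_nonneg by (simp add: a_def mult_left_le)
  ultimately have "norm z \<le> K1 * (2 * \<rho>) * exp K1"
    using z(2) by (meson exp_ge_zero mult_mono norm_ge_zero order_trans)
  with z(1) show ?thesis
    by (auto simp: mult_ac)
qed

lemma next_mode_bounds:
  assumes i: "i \<in> {2..T}"
    and prev_state: "\<And>e. e \<in> {0..\<tau>} \<Longrightarrow> norm (X e (i - 1) (real i - 1)) \<le> B"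
    and prev_deriv: "((\<lambda>e. X e (i - 1) (real i - 1)) has_vector_derivative z) (at_right \<epsilon>)" "norm z \<le> Bz"
  shows "\<And>e t. e \<in> {0..\<tau>} \<Longrightarrow> t \<in> {real i - 1..real i} \<Longrightarrow>
           norm (X e i t) \<le> (jump_bound B (ynorm (i - 1)) + growth_const) * exp K1"
    and "\<And>t. t \<in> {real i - 1..real i} \<Longrightarrow> \<exists>z'. ((\<lambda>e. X e i t) has_vector_derivative z') (at_right \<epsilon>)
           \<and> norm z' \<le> jump_bound B (ynorm (i - 1)) * Bz * exp K1"
proof -
  define a where "a = real i - 1"
  have w: "\<And>s. s \<in> {a..a + 1} \<Longrightarrow> u s \<in> cball 0 \<rho>"
    using u_bounded i by (auto simp: a_def)
  have sol: "ode_sol_on f u a (a + 1) (g (X e (i - 1) a) (ys (i - 1))) (X e i)" if "e \<in> {0..\<tau>}" for e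
    using later_mode_sol[OF that i] by (simp add: a_def)
  show "norm (X e i t) \<le> (jump_bound B (ynorm (i - 1)) + growth_const) * exp K1"
    if e: "e \<in> {0..\<tau>}" and t: "t \<in> {real i - 1..real i}" for e t
  proof -
    have "norm (X e i t) \<le> (norm (g (X e (i - 1) a) (ys (i - 1))) + growth_const) * exp K1"
      using ode_sol_on_norm_le[OF sol[OF e] _ _ w] t by (simp add: a_def)
    also have "\<dots> \<le> (jump_bound B (ynorm (i - 1)) + growth_const) * exp K1"
      using norm_jump_le[OF prev_state[OF e]] by (simp add: ynorm_def a_def)
    finally show ?thesis .
  qed
  obtain z1 where z1: "((\<lambda>e. g (X e (i - 1) a) (ys (i - 1))) has_vector_derivative z1) (at_right \<epsilon>)"
    "norm z1 \<le> jump_bound B (ynorm (i - 1)) * Bz"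
    using jump_right_derivative[OF prev_deriv(1) prev_state prev_deriv(2)] eps
    by (auto simp: ynorm_def a_def)
  have sols: "ode_sol_on f u a (a + 1) (X e i a) (X e i)" if "e \<in> {\<epsilon>..\<tau>}" for e
    using sol[of e] ode_sol_on_initial[OF sol[of e]] that eps by simp
  have init: "((\<lambda>e. X e i a) has_vector_derivative z1) (at_right \<epsilon>)"
    by (rule has_vector_derivative_at_right_cong[OF z1(1) eps(2)])
      (use sol ode_sol_on_initial eps in \<open>metis atLeastAtMost_iff order_trans less_imp_le\<close>)
  show "\<exists>z'. ((\<lambda>e. X e i t) has_vector_derivative z') (at_right \<epsilon>)
      \<and> norm z' \<le> jump_bound B (ynorm (i - 1)) * Bz * exp K1"
    if t: "t \<in> {real i - 1..real i}" for t
  proof -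
    obtain z' where z': "((\<lambda>e. X e i t) has_vector_derivative z') (at_right \<epsilon>)"
      "norm z' \<le> norm z1 * exp (K1 * (t - a))"
      using flow_right_derivative[OF w sols eps(2) init] t by (auto simp: a_def)
    moreover have "exp (K1 * (t - a)) \<le> exp K1"
      using t K_nonneg by (simp add: a_def mult_left_le)
    ultimately show ?thesis
      using z1(2) by (meson exp_ge_zero mult_mono norm_ge_zero order_trans)
  qed
qed

lemma mode_bounds:
  assumes "k < T"
  shows "(\<forall>e\<in>{0..\<tau>}. \<forall>t\<in>{real k..real k + 1}. norm (X e (Suc k) t) \<le> state_bound k ynorm) \<and>
    (\<forall>t\<in>{real k..real k + 1}. (k = 0 \<longrightarrow> \<tau> - \<epsilon> \<le> t) \<longrightarrow>
      (\<exists>z. ((\<lambda>e. X e (Suc k) t) has_vector_derivative z) (at_right \<epsilon>) \<and> norm z \<le> deriv_bound k ynorm))"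
  using assms
proof (induction k)
  case 0
  have "norm (X e 1 t) \<le> state_bound 0 ynorm" if "e \<in> {0..\<tau>}" "t \<in> {0..1}" for e t
    using ode_sol_on_norm_le[OF first_mode_sol _ _ first_mode.needle_bounded] that by simp
  then show ?case
    using first_mode_right_derivative by auto
next
  case (Suc k)
  have i: "Suc (Suc k) \<in> {2..T}" "real (Suc (Suc k)) - 1 = real k + 1"
    using Suc.prems by auto
  have "real k + 1 \<in> {real k..real k + 1}" "k = 0 \<longrightarrow> \<tau> - \<epsilon> \<le> real k + 1"
    using tau eps by auto
  with Suc.IH Suc.prems obtain z where
    "\<And>e. e \<in> {0..\<tau>} \<Longrightarrow> norm (X e (Suc k) (real k + 1)) \<le> state_bound k ynorm"
    "((\<lambda>e. X e (Suc k) (real k + 1)) has_vector_derivative z) (at_right \<epsilon>)" "norm z \<le> deriv_bound k ynorm"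
    by (meson Suc_lessD)
  from next_mode_bounds[OF i(1), unfolded i(2) diff_Suc_1, OF this] show ?case
    by (simp add: add.commute)
qed

lemma mode_state_le:
  "k < T \<Longrightarrow> e \<in> {0..\<tau>} \<Longrightarrow> t \<in> {real k..real k + 1} \<Longrightarrow> norm (X e (Suc k) t) \<le> state_bound k ynorm"
  using mode_bounds by blast

lemma mode_right_derivative:
  "k < T \<Longrightarrow> t \<in> {real k..real k + 1} \<Longrightarrow> (k = 0 \<Longrightarrow> \<tau> - \<epsilon> \<le> t) \<Longrightarrow>
    \<exists>z. ((\<lambda>e. X e (Suc k) t) has_vector_derivative z) (at_right \<epsilon>) \<and> norm z \<le> deriv_bound k ynorm"
  using mode_bounds by blast

lemma running_cost_right_derivative:
  assumes i: "1 \<le> i" "i \<le> T" and t: "t \<in> {real i - 1..real i}" "\<tau> < t"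
  shows "\<exists>D. ((\<lambda>e. c (X e i t) (needle u v \<tau> e t)) has_real_derivative D) (at_right \<epsilon>)
      \<and> \<bar>D\<bar> \<le> cost_bound (i - 1) ynorm"
proof -
  define k where "k = i - 1"
  have k: "k < T" "Suc k = i" "t \<in> {real k..real k + 1}" "k = 0 \<Longrightarrow> \<tau> - \<epsilon> \<le> t"
    using i t eps by (auto simp: k_def)
  obtain z where z: "((\<lambda>e. X e i t) has_vector_derivative z) (at_right \<epsilon>)" "norm z \<le> deriv_bound k ynorm"
    using mode_right_derivative[OF k(1,3,4)] unfolding k(2) by blast
  have "norm (X \<epsilon> i t) \<le> state_bound k ynorm"
    using mode_state_le[OF k(1) _ k(3), of \<epsilon>] eps unfolding k(2) by simp
  moreover have "u t \<in> cball 0 \<rho>"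
    using u_bounded t tau i by auto
  moreover have "needle u v \<tau> e t = u t" for e
    using t by (simp add: needle_def)
  ultimately show ?thesis
    using cost_compose_right_derivative[OF z(1) c_diff c'_bound _ z(2)] by (simp add: cost_bound_def k_def)
qed

text \<open>The terminal jump is bounded like a jump into a further mode, that is, by
  \<open>state_bound T\<close> and \<open>deriv_bound T\<close>.\<close>

lemma terminal_cost_right_derivative:
  "\<exists>D. ((\<lambda>e. h (g (X e T (real T)) (ys T))) has_real_derivative D) (at_right \<epsilon>)
      \<and> \<bar>D\<bar> \<le> cost_bound T ynorm"
proof -
  define k where "k = T - 1"
  have k: "k < T" "Suc k = T" "real T \<in> {real k..real k + 1}" "k = 0 \<Longrightarrow> \<tau> - \<epsilon> \<le> real T"
    using T_pos tau eps by (auto simp: k_def)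
  obtain z where z: "((\<lambda>e. X e T (real T)) has_vector_derivative z) (at_right \<epsilon>)"
    "norm z \<le> deriv_bound k ynorm"
    using mode_right_derivative[OF k(1,3,4)] unfolding k(2) by blast
  have x: "norm (X \<epsilon> T (real T)) \<le> state_bound k ynorm"
    using mode_state_le[OF k(1) _ k(3), of \<epsilon>] eps unfolding k(2) by simp
  obtain z' where z': "((\<lambda>e. g (X e T (real T)) (ys T)) has_vector_derivative z') (at_right \<epsilon>)"
    "norm z' \<le> jump_bound (state_bound k ynorm) (ynorm T) * deriv_bound k ynorm"
    using jump_right_derivative[OF z(1) x z(2)] by (auto simp: ynorm_def)
  have J: "0 \<le> jump_bound (state_bound k ynorm) (ynorm T)"
    using x by (intro jump_bound_nonneg) (auto simp: ynorm_def intro: order_trans[OF norm_ge_zero])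
  have exp_factor: "y \<le> y * exp K1" if "0 \<le> y" for y
    using that K_nonneg by (simp add: mult_le_cancel_left1)
  have "norm (g (X \<epsilon> T (real T)) (ys T)) \<le> state_bound T ynorm"
  proof -
    have "jump_bound (state_bound k ynorm) (ynorm T)
        \<le> (jump_bound (state_bound k ynorm) (ynorm T) + growth_const) * exp K1"
      using exp_factor[of "jump_bound (state_bound k ynorm) (ynorm T) + growth_const"] J growth_const_nonneg
      by linarith
    then show ?thesis
      using norm_jump_le[OF x, of "ys T"] k(2)[symmetric] by (simp add: ynorm_def)
  qed
  moreover have "norm z' \<le> deriv_bound T ynorm"
  proof -
    have "jump_bound (state_bound k ynorm) (ynorm T) * deriv_bound k ynorm
        \<le> jump_bound (state_bound k ynorm) (ynorm T) * deriv_bound k ynorm * exp K1"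
      using exp_factor J z(2) by (simp add: order_trans[OF norm_ge_zero])
    then show ?thesis
      using z'(2) k(2)[symmetric] by simp
  qed
  ultimately show ?thesis
    using cost_compose_right_derivative[OF z'(1) h_diff h'_bound] by (simp add: cost_bound_def)
qed

end

context hybrid_cost_problem
begin

lemma needle_cost_derivatives_bounded:
  fixes u :: "real \<Rightarrow> 'u" and ys :: "nat \<Rightarrow> 'y" and X :: "real \<Rightarrow> nat \<Rightarrow> real \<Rightarrow> 'x"
  assumes first: "\<And>r. cost_bound 0 r \<le> \<beta>1"
    and later: "\<And>i r. i \<in> {2..T+1} \<Longrightarrow> \<forall>m. 0 \<le> r m \<Longrightarrow>
      cost_bound (i - 1) r \<le> (\<Sum>js\<in>L i. \<beta> i js * (\<Prod>m<i - 1. r (m + 1) ^ (js ! m)))"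
    and u: "u \<in> admissible_controls T \<rho>" and eps: "0 \<le> \<epsilon>" "\<epsilon> < \<tau>"
    and modes: "\<forall>e\<in>{0..\<tau>}. hybrid_modes f g T x0 ys (needle u v \<tau> e) (X e)"
  shows "(\<forall>t\<in>{\<tau><..1}. \<exists>D. ((\<lambda>e. c (X e 1 t) (needle u v \<tau> e t)) has_real_derivative D) (at_right \<epsilon>)
            \<and> \<bar>D\<bar> \<le> \<beta>1) \<and>
    (\<forall>i\<in>{2..T}. \<forall>t\<in>{real i - 1..real i}.
       \<exists>D. ((\<lambda>e. c (X e i t) (needle u v \<tau> e t)) has_real_derivative D) (at_right \<epsilon>) \<and>
           \<bar>D\<bar> \<le> (\<Sum>js\<in>L i. \<beta> i js * (\<Prod>m<i - 1. norm (ys (m + 1)) ^ (js ! m)))) \<and>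
    (\<exists>D. ((\<lambda>e. h (g (X e T (real T)) (ys T))) has_real_derivative D) (at_right \<epsilon>) \<and>
           \<bar>D\<bar> \<le> (\<Sum>js\<in>L (T+1). \<beta> (T+1) js * (\<Prod>m<T. norm (ys (m + 1)) ^ (js ! m))))"
proof -
  interpret needle_perturbed_hybrid f \<rho> K1 fx g g' c c' h h' K2 K3 K4 K5 K6 K7 L1 L2 L3 T x0 \<tau> v u ys \<epsilon> X
    using u eps modes by unfold_locales auto
  have later: "cost_bound (i - 1) ynorm \<le> (\<Sum>js\<in>L i. \<beta> i js * (\<Prod>m<i - 1. norm (ys (m + 1)) ^ (js ! m)))"
    if "i \<in> {2..T+1}" for i
    using later[OF that, of ynorm] by (simp add: ynorm_def)
  show ?thesis
  proof (intro conjI ballI)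
  fix t assume "t \<in> {\<tau><..1}"
  then obtain D where "((\<lambda>e. c (X e 1 t) (needle u v \<tau> e t)) has_real_derivative D) (at_right \<epsilon>)"
    "\<bar>D\<bar> \<le> cost_bound 0 ynorm"
    using running_cost_right_derivative[of 1 t] T_pos tau by auto
  with first[of ynorm] show "\<exists>D. ((\<lambda>e. c (X e 1 t) (needle u v \<tau> e t)) has_real_derivative D) (at_right \<epsilon>)
      \<and> \<bar>D\<bar> \<le> \<beta>1"
    by force
next
  fix i t assume i: "i \<in> {2..T}" and t: "t \<in> {real i - 1..real i}"
  then obtain D where "((\<lambda>e. c (X e i t) (needle u v \<tau> e t)) has_real_derivative D) (at_right \<epsilon>)"
    "\<bar>D\<bar> \<le> cost_bound (i - 1) ynorm"
    using running_cost_right_derivative[of i t] tau by auto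
  with later[of i] i show "\<exists>D. ((\<lambda>e. c (X e i t) (needle u v \<tau> e t)) has_real_derivative D) (at_right \<epsilon>)
      \<and> \<bar>D\<bar> \<le> (\<Sum>js\<in>L i. \<beta> i js * (\<Prod>m<i - 1. norm (ys (m + 1)) ^ (js ! m)))"
    by force
next
  obtain D where "((\<lambda>e. h (g (X e T (real T)) (ys T))) has_real_derivative D) (at_right \<epsilon>)"
    "\<bar>D\<bar> \<le> cost_bound T ynorm"
    using terminal_cost_right_derivative by blast
  with later[of "T + 1"] T_pos show "\<exists>D. ((\<lambda>e. h (g (X e T (real T)) (ys T))) has_real_derivative D) (at_right \<epsilon>)
      \<and> \<bar>D\<bar> \<le> (\<Sum>js\<in>L (T+1). \<beta> (T+1) js * (\<Prod>m<T. norm (ys (m + 1)) ^ (js ! m)))"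
    by force
qed
qed

end

theorem proposition11:
  fixes f :: "'x::euclidean_space \<Rightarrow> 'u::euclidean_space \<Rightarrow> 'x"
    and f' :: "'x \<times> 'u \<Rightarrow> ('x \<times> 'u) \<Rightarrow>\<^sub>L 'x"
    and g :: "'x \<Rightarrow> 'y::euclidean_space \<Rightarrow> 'x"
    and g' :: "'x \<Rightarrow> 'y \<Rightarrow> 'x \<Rightarrow>\<^sub>L 'x"
    and c :: "'x \<Rightarrow> 'u \<Rightarrow> real"
    and c' :: "'x \<Rightarrow> 'u \<Rightarrow> 'x \<Rightarrow>\<^sub>L real"
    and h :: "'x \<Rightarrow> real"
    and h' :: "'x \<Rightarrow> 'x \<Rightarrow>\<^sub>L real"
    and T L1 L2 L3 :: nat
    and \<rho> K1 K2 K3 K4 K5 K6 K7 \<tau> :: real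
    and x0 :: 'x and v :: 'u
  assumes T_pos: "0 < T"
    and rho_pos: "0 < \<rho>"
    and f_C1: "\<And>p. ((\<lambda>q. f (fst q) (snd q)) has_derivative blinfun_apply (f' p)) (at p)"
    and f'_cont: "continuous_on UNIV f'"
    and K1: "1 \<le> K1"
    and f_lip: "\<And>x1 x2 u1 u2. u1 \<in> cball 0 \<rho> \<Longrightarrow> u2 \<in> cball 0 \<rho> \<Longrightarrow>
                 norm (f x1 u1 - f x2 u2) \<le> K1 * (norm (x1 - x2) + norm (u1 - u2))"
    and g_cont: "continuous_on UNIV (\<lambda>p. g (fst p) (snd p))"
    and g_diff: "\<And>x y. ((\<lambda>z. g z y) has_derivative blinfun_apply (g' x y)) (at x)"
    and K2345: "0 \<le> K2" "0 \<le> K3" "0 \<le> K4" "0 \<le> K5"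
    and L12: "0 < L1" "0 < L2"
    and g_bound: "\<And>x y. norm (g x y) \<le> K2 + K3 * norm x ^ L1 + K4 * norm y ^ L2
                                        + K5 * norm x ^ L1 * norm y ^ L2"
    and g'_bound: "\<And>x y. norm (g' x y) \<le> K2 + K3 * norm x ^ L1 + K4 * norm y ^ L2
                                        + K5 * norm x ^ L1 * norm y ^ L2"
    and c_cont: "continuous_on UNIV (\<lambda>p. c (fst p) (snd p))"
    and c_diff: "\<And>x u. ((\<lambda>z. c z u) has_derivative blinfun_apply (c' x u)) (at x)"
    and c'_cont: "continuous_on UNIV (\<lambda>p. c' (fst p) (snd p))"
    and h_diff: "\<And>x. (h has_derivative blinfun_apply (h' x)) (at x)"
    and K67: "0 \<le> K6" "0 \<le> K7"
    and L3: "0 < L3"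
    and c_bound: "\<And>x u. u \<in> cball 0 \<rho> \<Longrightarrow> \<bar>c x u\<bar> \<le> K6 + K7 * norm x ^ L3"
    and c'_bound: "\<And>x u. u \<in> cball 0 \<rho> \<Longrightarrow> norm (c' x u) \<le> K6 + K7 * norm x ^ L3"
    and h_bound: "\<And>x. \<bar>h x\<bar> \<le> K6 + K7 * norm x ^ L3"
    and h'_bound: "\<And>x. norm (h' x) \<le> K6 + K7 * norm x ^ L3"
    and tau: "0 < \<tau>" "\<tau> < 1"
    and v: "v \<in> cball 0 \<rho>"
  shows "\<exists>(\<beta>1::real) (\<L>::nat \<Rightarrow> nat list set) (\<beta>::nat \<Rightarrow> nat list \<Rightarrow> real).
     0 < \<beta>1 \<and>
     (\<forall>i\<in>{2..T+1}. finite (\<L> i) \<and> (\<forall>js\<in>\<L> i. length js = i - 1 \<and> 0 < \<beta> i js)) \<and>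
     (\<forall>u\<in>admissible_controls T \<rho>. continuous (at_left \<tau>) u \<longrightarrow>
      (\<forall>(ys::nat \<Rightarrow> 'y) (\<epsilon>::real) (X::real \<Rightarrow> nat \<Rightarrow> real \<Rightarrow> 'x).
        0 \<le> \<epsilon> \<longrightarrow> \<epsilon> < \<tau> \<longrightarrow>
        (\<forall>e\<in>{0..\<tau>}. hybrid_modes f g T x0 ys (needle u v \<tau> e) (X e)) \<longrightarrow>
        (\<forall>t\<in>{\<tau><..1}. \<exists>D. ((\<lambda>e. c (X e 1 t) (needle u v \<tau> e t)) has_real_derivative D)
                                 (at_right \<epsilon>) \<and> \<bar>D\<bar> \<le> \<beta>1) \<and>
        (\<forall>i\<in>{2..T}. \<forall>t\<in>{real i - 1..real i}.
           \<exists>D. ((\<lambda>e. c (X e i t) (needle u v \<tau> e t)) has_real_derivative D) (at_right \<epsilon>) \<and>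
               \<bar>D\<bar> \<le> (\<Sum>js\<in>\<L> i. \<beta> i js * (\<Prod>m<i - 1. norm (ys (m + 1)) ^ (js ! m)))) \<and>
        (\<exists>D. ((\<lambda>e. h (g (X e T (real T)) (ys T))) has_real_derivative D) (at_right \<epsilon>) \<and>
               \<bar>D\<bar> \<le> (\<Sum>js\<in>\<L> (T+1). \<beta> (T+1) js * (\<Prod>m<T. norm (ys (m + 1)) ^ (js ! m))))))"
proof -
  interpret hybrid_cost_problem f \<rho> K1 "\<lambda>x u. f' (x, u) o\<^sub>L Blinfun (\<lambda>h. (h, 0))"
    g g' c c' h h' K2 K3 K4 K5 K6 K7 L1 L2 L3 T x0 \<tau> v
    using partial_derivative_fst[OF f_C1 f'_cont] rho_pos K1 f_lip g_diff K2345 g_bound g'_bound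
      c_diff h_diff K67 c'_bound h'_bound T_pos tau v
    by unfold_locales auto
  define \<beta>1 where "\<beta>1 = cost_bound 0 (\<lambda>_. 0) + 1"
  have "0 \<le> cost_bound 0 (\<lambda>_. 0)"
    by (rule poly_bounded_nonneg[OF poly_bounded_cost_bound]) simp
  moreover have "cost_bound 0 r = cost_bound 0 (\<lambda>_. 0)" for r
    by (simp add: cost_bound_def)
  ultimately have \<beta>1: "0 < \<beta>1" "\<And>r. cost_bound 0 r \<le> \<beta>1"
    unfolding \<beta>1_def by (metis add_nonneg_pos less_add_one less_imp_le zero_less_one)+
  show ?thesis
  proof (rule cost_bound_monomial_sums)
    fix L \<beta>
    assume L_fin: "\<And>i. i \<in> {2..T+1} \<Longrightarrow> finite (L i) \<and> (\<forall>js\<in>L i. length js = i - 1 \<and> 0 < \<beta> i js)"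
      and L_le: "\<And>i r. i \<in> {2..T+1} \<Longrightarrow> \<forall>m. 0 \<le> r m \<Longrightarrow>
        cost_bound (i - 1) r \<le> (\<Sum>js\<in>L i. \<beta> i js * (\<Prod>m<i - 1. r (m + 1) ^ (js ! m)))"
    have L_fin': "\<forall>i\<in>{2..T+1}. finite (L i) \<and> (\<forall>js\<in>L i. length js = i - 1 \<and> 0 < \<beta> i js)"
      by (intro ballI L_fin)
    show ?thesis
      by (intro exI[of _ \<beta>1] exI[of _ L] exI[of _ \<beta>] conjI[OF \<beta>1(1) conjI[OF L_fin']] ballI impI allI)
        (rule needle_cost_derivatives_bounded[OF \<beta>1(2) L_le])
  qed
qed

end
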